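(* Let $A'=[a'_{ijk}]$ be an $m'\times n'\times k'$ hypermatrix with entries in $\{0,1,-1\}$. Then there exist an integer $n\ge\max\{m',n',k'\}$, an $n\times n\times n$ ASHM $A=[a_{ijk}]$, and index sets $I=\{i_1<\cdots<i_{m'}\}$, $J=\{j_1<\cdots<j_{n'}\}$, $K=\{k_1<\cdots<k_{k'}\}\subseteq\{1,\ldots,n\}$ such that $a'_{pqr}=a_{i_pj_qk_r}$ for all $p,q,r$; that is, $A'$ is obtained from $A$ by deleting planes. Moreover, $A$ can be obtained from $A'$ by repeatedly inserting new planes (horizontal, row-vertical and column-vertical) each of which is a subpermutation matrix or the negative of a subpermutation matrix.
   Context: An $n\times n\times n$ hypermatrix $A=[a_{ijk}]$ is an alternating sign hypermatrix (ASHM) if all entries are in $\{0,\pm1\}$ and in every line (obtained by fixing two of the three indices) the nonzeros alternate in sign beginning and ending with $+1$. Planes of a hypermatrix are obtained by fixing one index: horizontal planes (fix the third index), row-vertical planes (fix the first index), column-vertical planes (fix the second index). A subpermutation matrix is a $(0,1)$-matrix with at most one $1$ in every row and column. *)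

theory Defs
  imports Main
begin

text \<open>Hypermatrices are represented with 0-based indices: an m x n x k hypermatrix
  is a function A :: nat => nat => nat => int, of which only the entries A i j l
  with i < m, j < n, l < k are relevant.\<close>

type_synonym hmat = "nat \<Rightarrow> nat \<Rightarrow> nat \<Rightarrow> int"

definition sign_entries :: "int \<Rightarrow> bool" where
  "sign_entries x \<longleftrightarrow> x \<in> {0, 1, -1}"

definition alt_line :: "nat \<Rightarrow> (nat \<Rightarrow> int) \<Rightarrow> bool" where
  "alt_line n f \<longleftrightarrow>
     (let xs = filter (\<lambda>x. x \<noteq> 0) (map f [0..<n]) in
       xs \<noteq> [] \<and> hd xs = 1 \<and> last xs = 1 \<and>
       (\<forall>t. Suc t < length xs \<longrightarrow> xs ! Suc t = - (xs ! t)))"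

definition is_ASHM :: "nat \<Rightarrow> hmat \<Rightarrow> bool" where
  "is_ASHM n A \<longleftrightarrow>
     (\<forall>i<n. \<forall>j<n. \<forall>l<n. sign_entries (A i j l)) \<and>
     (\<forall>j<n. \<forall>l<n. alt_line n (\<lambda>i. A i j l)) \<and>
     (\<forall>i<n. \<forall>l<n. alt_line n (\<lambda>j. A i j l)) \<and>
     (\<forall>i<n. \<forall>j<n. alt_line n (\<lambda>l. A i j l))"

definition subperm :: "nat \<Rightarrow> nat \<Rightarrow> (nat \<Rightarrow> nat \<Rightarrow> int) \<Rightarrow> bool" where
  "subperm m n P \<longleftrightarrow>
     (\<forall>i<m. \<forall>j<n. P i j \<in> {0, 1}) \<and>
     (\<forall>i<m. \<forall>j<n. \<forall>j'<n. P i j = 1 \<and> P i j' = 1 \<longrightarrow> j = j') \<and>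
     (\<forall>j<n. \<forall>i<m. \<forall>i'<m. P i j = 1 \<and> P i' j = 1 \<longrightarrow> i = i')"

definition signed_subperm :: "nat \<Rightarrow> nat \<Rightarrow> (nat \<Rightarrow> nat \<Rightarrow> int) \<Rightarrow> bool" where
  "signed_subperm m n P \<longleftrightarrow> subperm m n P \<or> subperm m n (\<lambda>i j. - P i j)"

text \<open>A hypermatrix is a tuple (m, n, k, A).\<close>
inductive insert_plane :: "nat \<times> nat \<times> nat \<times> hmat \<Rightarrow> nat \<times> nat \<times> nat \<times> hmat \<Rightarrow> bool" where
  row_vertical: "t \<le> m \<Longrightarrow> signed_subperm n k P \<Longrightarrow>
    insert_plane (m, n, k, A)
      (Suc m, n, k, \<lambda>i j l. if i = t then P j l else if i < t then A i j l else A (i - 1) j l)"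
| column_vertical: "t \<le> n \<Longrightarrow> signed_subperm m k P \<Longrightarrow>
    insert_plane (m, n, k, A)
      (m, Suc n, k, \<lambda>i j l. if j = t then P i l else if j < t then A i j l else A i (j - 1) l)"
| horizontal: "t \<le> k \<Longrightarrow> signed_subperm m n P \<Longrightarrow>
    insert_plane (m, n, k, A)
      (m, n, Suc k, \<lambda>i j l. if l = t then P i j else if l < t then A i j l else A i j (l - 1))"

end

theory Submission
  imports Defs
begin

text \<open>The planes are inserted in three stages. A correction pass along one axis puts in front
  of every plane \<open>2M\<close> new signed subpermutation planes, \<open>M\<close> the larger of the other two
  dimensions, which for every line cancel each entry that would take its running sum out of
  \<open>{0, 1}\<close>; five passes, along the axes 1, 2, 3, 1, 2,
  give a hypermatrix all of whose lines have their prefix sums in \<open>{0, 1}\<close>. Zero planes then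
  pad it to an \<open>N \<times> N \<times> N\<close> cube. Finally \<open>N\<close> new planes in each direction supply the missing
  last \<open>+1\<close> of every line with sum \<open>0\<close>: in the first direction along broken diagonals, in
  the other two along a decomposition, by Hall's theorem, of an \<open>N\<close>-regular bipartite relation
  into \<open>N\<close> permutations. A line with entries in \<open>{0, 1, -1}\<close>, prefix sums in \<open>{0, 1}\<close> and
  sum \<open>1\<close> alternates in sign starting and ending with \<open>+1\<close>, so the result is an ASHM, and
  deleting the inserted planes gives back the original hypermatrix.\<close>

section \<open>Plane insertions\<close>

type_synonym sized_hmat = "nat \<times> nat \<times> nat \<times> hmat"

definition box_eq :: "sized_hmat \<Rightarrow> sized_hmat \<Rightarrow> bool" where
  "box_eq X Y \<longleftrightarrow> (case X of (a,b,c,h) \<Rightarrow> case Y of (a',b',c',g) \<Rightarrow>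
      a = a' \<and> b = b' \<and> c = c' \<and> (\<forall>i<a. \<forall>j<b. \<forall>l<c. h i j l = g i j l))"

lemma box_eq_iff:
  "box_eq (a,b,c,h) (a',b',c',g) \<longleftrightarrow> a = a' \<and> b = b' \<and> c = c' \<and> (\<forall>i<a. \<forall>j<b. \<forall>l<c. h i j l = g i j l)"
  by (simp add: box_eq_def)

lemma box_eq_refl: "box_eq X X"
  by (cases X) (auto simp: box_eq_def)

lemma box_eq_sym: "box_eq X Y \<Longrightarrow> box_eq Y X"
  by (cases X; cases Y) (auto simp: box_eq_def)

lemma box_eq_trans: "box_eq X Y \<Longrightarrow> box_eq Y Z \<Longrightarrow> box_eq X Z"
  by (cases X; cases Y; cases Z) (auto simp: box_eq_def)

lemma insert_plane_box_eq:
  assumes "insert_plane X Y" "box_eq X X'"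
  shows "\<exists>Y'. insert_plane X' Y' \<and> box_eq Y Y'"
  using assms(1)
proof cases
  case (row_vertical t m n k P A)
  obtain h where X': "X' = (m,n,k,h)" and ag: "\<forall>i<m. \<forall>j<n. \<forall>l<k. A i j l = h i j l"
    using assms(2) row_vertical by (cases X') (auto simp: box_eq_def)
  let ?Y = "(Suc m, n, k, \<lambda>i j l. if i = t then P j l else if i < t then h i j l else h (i - 1) j l)"
  have "insert_plane X' ?Y" unfolding X' using row_vertical by (intro insert_plane.row_vertical) auto
  moreover have "box_eq Y ?Y" using row_vertical ag by (auto simp: box_eq_def)
  ultimately show ?thesis by blast
next
  case (column_vertical t n m k P A)
  obtain h where X': "X' = (m,n,k,h)" and ag: "\<forall>i<m. \<forall>j<n. \<forall>l<k. A i j l = h i j l"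
    using assms(2) column_vertical by (cases X') (auto simp: box_eq_def)
  let ?Y = "(m, Suc n, k, \<lambda>i j l. if j = t then P i l else if j < t then h i j l else h i (j - 1) l)"
  have "insert_plane X' ?Y" unfolding X' using column_vertical by (intro insert_plane.column_vertical) auto
  moreover have "box_eq Y ?Y" using column_vertical ag by (auto simp: box_eq_def)
  ultimately show ?thesis by blast
next
  case (horizontal t k m n P A)
  obtain h where X': "X' = (m,n,k,h)" and ag: "\<forall>i<m. \<forall>j<n. \<forall>l<k. A i j l = h i j l"
    using assms(2) horizontal by (cases X') (auto simp: box_eq_def)
  let ?Y = "(m, n, Suc k, \<lambda>i j l. if l = t then P i j else if l < t then h i j l else h i j (l - 1))"
  have "insert_plane X' ?Y" unfolding X' using horizontal by (intro insert_plane.horizontal) auto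
  moreover have "box_eq Y ?Y" using horizontal ag by (auto simp: box_eq_def)
  ultimately show ?thesis by blast
qed

lemma insert_planes_box_eq:
  assumes "insert_plane\<^sup>*\<^sup>* X Y" "box_eq X X'"
  shows "\<exists>Y'. insert_plane\<^sup>*\<^sup>* X' Y' \<and> box_eq Y Y'"
  using assms
proof (induction arbitrary: X' rule: rtranclp_induct)
  case base then show ?case by blast
next
  case (step Y Z)
  then obtain Y' where "insert_plane\<^sup>*\<^sup>* X' Y'" "box_eq Y Y'" by blast
  with insert_plane_box_eq[OF step(2) this(2)] show ?case
    by (meson rtranclp.rtrancl_into_rtrancl)
qed

text \<open>Entries outside the box are irrelevant, so insertion sequences are considered up to
  \<open>box_eq\<close>.\<close>
definition inserts_to :: "sized_hmat \<Rightarrow> sized_hmat \<Rightarrow> bool" where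
  "inserts_to X Y \<longleftrightarrow> (\<exists>Y'. insert_plane\<^sup>*\<^sup>* X Y' \<and> box_eq Y' Y)"

lemma inserts_to_refl: "inserts_to X X"
  unfolding inserts_to_def using box_eq_refl by blast

lemma inserts_to_box_eq: "inserts_to X Y \<Longrightarrow> box_eq Y Z \<Longrightarrow> inserts_to X Z"
  unfolding inserts_to_def using box_eq_trans by blast

lemma inserts_to_trans [trans]: "inserts_to X Y \<Longrightarrow> inserts_to Y Z \<Longrightarrow> inserts_to X Z"
  unfolding inserts_to_def by (meson insert_planes_box_eq rtranclp_trans box_eq_sym box_eq_trans)

lemma inserts_to_insert_plane: "insert_plane X Y \<Longrightarrow> box_eq Y Z \<Longrightarrow> inserts_to X Z"
  unfolding inserts_to_def by blast

definition subhmat :: "sized_hmat \<Rightarrow> sized_hmat \<Rightarrow> bool" where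
  "subhmat X Y \<longleftrightarrow> (case X of (a,b,c,h) \<Rightarrow> case Y of (a',b',c',g) \<Rightarrow>
     (\<exists>fI fJ fK. strict_mono_on {..<a} fI \<and> fI ` {..<a} \<subseteq> {..<a'} \<and>
        strict_mono_on {..<b} fJ \<and> fJ ` {..<b} \<subseteq> {..<b'} \<and>
        strict_mono_on {..<c} fK \<and> fK ` {..<c} \<subseteq> {..<c'} \<and>
        (\<forall>i<a. \<forall>j<b. \<forall>l<c. h i j l = g (fI i) (fJ j) (fK l))))"

lemma subhmat_box_eq: "box_eq X Y \<Longrightarrow> subhmat X Y"
  by (cases X; cases Y) (auto intro!: exI[of _ id] simp: strict_mono_on_def box_eq_def subhmat_def)

lemma strict_mono_on_comp:
  assumes "strict_mono_on A f" "f ` A \<subseteq> B" "strict_mono_on B g"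
  shows "strict_mono_on A (g \<circ> f)"
  using assms unfolding strict_mono_on_def by (auto simp: image_subset_iff)

lemma subhmat_trans:
  assumes "subhmat X Y" "subhmat Y Z"
  shows "subhmat X Z"
proof -
  obtain a b c h a' b' c' g a'' b'' c'' k
    where XYZ: "X = (a,b,c,h)" "Y = (a',b',c',g)" "Z = (a'',b'',c'',k)"
    by (cases X; cases Y; cases Z) auto
  obtain fI fJ fK where f: "strict_mono_on {..<a} fI" "fI ` {..<a} \<subseteq> {..<a'}"
        "strict_mono_on {..<b} fJ" "fJ ` {..<b} \<subseteq> {..<b'}"
        "strict_mono_on {..<c} fK" "fK ` {..<c} \<subseteq> {..<c'}"
        "\<forall>i<a. \<forall>j<b. \<forall>l<c. h i j l = g (fI i) (fJ j) (fK l)"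
    using assms(1) unfolding XYZ subhmat_def by auto
  obtain gI gJ gK where g: "strict_mono_on {..<a'} gI" "gI ` {..<a'} \<subseteq> {..<a''}"
        "strict_mono_on {..<b'} gJ" "gJ ` {..<b'} \<subseteq> {..<b''}"
        "strict_mono_on {..<c'} gK" "gK ` {..<c'} \<subseteq> {..<c''}"
        "\<forall>i<a'. \<forall>j<b'. \<forall>l<c'. g i j l = k (gI i) (gJ j) (gK l)"
    using assms(2) unfolding XYZ subhmat_def by auto
  show ?thesis
    unfolding XYZ subhmat_def prod.case
    using f g strict_mono_on_comp[OF f(1,2) g(1)] strict_mono_on_comp[OF f(3,4) g(3)]
      strict_mono_on_comp[OF f(5,6) g(5)]
    by (intro exI[of _ "gI \<circ> fI"] exI[of _ "gJ \<circ> fJ"] exI[of _ "gK \<circ> fK"])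
      (auto simp: image_subset_iff)
qed

lemma subhmat_insert_plane: "insert_plane X Y \<Longrightarrow> subhmat X Y"
proof (induction rule: insert_plane.induct)
  case (row_vertical t m n k P A)
  show ?case unfolding subhmat_def prod.case
    by (intro exI[of _ "\<lambda>i. if i < t then i else Suc i"] exI[of _ id])
      (auto simp: strict_mono_on_def)
next
  case (column_vertical t n m k P A)
  show ?case unfolding subhmat_def prod.case
    by (intro exI[of _ id] exI[of _ "\<lambda>i. if i < t then i else Suc i"] exI[of _ id])
      (auto simp: strict_mono_on_def)
next
  case (horizontal t k m n P A)
  show ?case unfolding subhmat_def prod.case
    by (intro exI[of _ id] exI[of _ id] exI[of _ "\<lambda>i. if i < t then i else Suc i"])
      (auto simp: strict_mono_on_def)
qed

lemma subhmat_inserts_to: "inserts_to X Y \<Longrightarrow> subhmat X Y"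
proof -
  have "subhmat X Y" if "insert_plane\<^sup>*\<^sup>* X Y" for Y
    using that
    by (induction rule: rtranclp_induct)
      (auto intro: subhmat_box_eq[OF box_eq_refl] subhmat_trans subhmat_insert_plane)
  then show "inserts_to X Y \<Longrightarrow> subhmat X Y"
    unfolding inserts_to_def using subhmat_box_eq subhmat_trans by blast
qed

lemma inserts_to_append1:
  assumes "\<forall>k<t. signed_subperm b c (P k)"
  shows "inserts_to (a,b,c,h) (a+t, b, c, \<lambda>i j l. if i < a then h i j l else P (i - a) j l)"
  using assms
proof (induction t)
  case 0
  show ?case using inserts_to_refl[of "(a,b,c,h)"] by (rule inserts_to_box_eq) (auto simp: box_eq_def)
next
  case (Suc t)
  let ?F = "\<lambda>i j l. if i < a then h i j l else P (i - a) j l"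
  have "insert_plane (a+t,b,c,?F) (Suc (a+t), b, c,
      \<lambda>i j l. if i = a+t then P t j l else if i < a+t then ?F i j l else ?F (i - 1) j l)"
    using Suc.prems by (intro insert_plane.row_vertical) auto
  then have "inserts_to (a+t,b,c,?F) (a + Suc t, b, c, ?F)"
    by (rule inserts_to_insert_plane) (auto simp: box_eq_def)
  then show ?case using Suc inserts_to_trans by auto
qed

lemma inserts_to_append2:
  assumes "\<forall>k<t. signed_subperm a c (P k)"
  shows "inserts_to (a,b,c,h) (a, b+t, c, \<lambda>i j l. if j < b then h i j l else P (j - b) i l)"
  using assms
proof (induction t)
  case 0
  show ?case using inserts_to_refl[of "(a,b,c,h)"] by (rule inserts_to_box_eq) (auto simp: box_eq_def)
next
  case (Suc t)
  let ?F = "\<lambda>i j l. if j < b then h i j l else P (j - b) i l"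
  have "insert_plane (a,b+t,c,?F) (a, Suc (b+t), c,
      \<lambda>i j l. if j = b+t then P t i l else if j < b+t then ?F i j l else ?F i (j - 1) l)"
    using Suc.prems by (intro insert_plane.column_vertical) auto
  then have "inserts_to (a,b+t,c,?F) (a, b + Suc t, c, ?F)"
    by (rule inserts_to_insert_plane) (auto simp: box_eq_def)
  then show ?case using Suc inserts_to_trans by auto
qed

lemma inserts_to_append3:
  assumes "\<forall>k<t. signed_subperm a b (P k)"
  shows "inserts_to (a,b,c,h) (a, b, c+t, \<lambda>i j l. if l < c then h i j l else P (l - c) i j)"
  using assms
proof (induction t)
  case 0
  show ?case using inserts_to_refl[of "(a,b,c,h)"] by (rule inserts_to_box_eq) (auto simp: box_eq_def)
next
  case (Suc t)
  let ?F = "\<lambda>i j l. if l < c then h i j l else P (l - c) i j"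
  have "insert_plane (a,b,c+t,?F) (a, b, Suc (c+t), 
      \<lambda>i j l. if l = c+t then P t i j else if l < c+t then ?F i j l else ?F i j (l - 1))"
    using Suc.prems by (intro insert_plane.horizontal) auto
  then have "inserts_to (a,b,c+t,?F) (a, b, c + Suc t, ?F)"
    by (rule inserts_to_insert_plane) (auto simp: box_eq_def)
  then show ?case using Suc inserts_to_trans by auto
qed

text \<open>A list of old plane indices \<open>Inl p\<close> and new planes \<open>Inr P\<close> describes the
  hypermatrix whose row-vertical planes are read off the list in order.\<close>
definition interleave :: "(nat + (nat \<Rightarrow> nat \<Rightarrow> int)) list \<Rightarrow> hmat \<Rightarrow> hmat" where
  "interleave L h = (\<lambda>i j l. case L ! i of Inl p \<Rightarrow> h p j l | Inr P \<Rightarrow> P j l)"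

lemma interleave_insert_last:
  assumes x: "\<not> isl x" and L2: "\<forall>z\<in>set L2. isl z"
  shows "box_eq (Suc (length (L1 @ L2)), b, c, \<lambda>i j l. if i = length L1 then projr x j l
             else if i < length L1 then interleave (L1 @ L2) h i j l
             else interleave (L1 @ L2) h (i - 1) j l)
           (length (L1 @ x # L2), b, c, interleave (L1 @ x # L2) h)"
proof -
  have "(if i = length L1 then projr x j l else if i < length L1 then interleave (L1 @ L2) h i j l
          else interleave (L1 @ L2) h (i - 1) j l) = interleave (L1 @ x # L2) h i j l"
    if i: "i < length (L1 @ x # L2)" for i j l
  proof -
    consider "i = length L1" | "i < length L1" | "length L1 < i" by linarith
    then show ?thesis
    proof cases
      case 1 then show ?thesis using x by (cases x) (auto simp: interleave_def)
    next
      case 2 then show ?thesis by (simp add: interleave_def nth_append)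
    next
      case 3
      then have "(L1 @ x # L2) ! i = (L1 @ L2) ! (i - 1)"
        using i by (auto simp: nth_append nth_Cons' split: if_splits)
      then show ?thesis using 3 by (simp add: interleave_def)
    qed
  qed
  then show ?thesis by (auto simp: box_eq_def)
qed

lemma inserts_to_interleave:
  assumes "map projl (filter isl L) = [0..<a]"
    and "\<forall>x\<in>set L. \<not> isl x \<longrightarrow> signed_subperm b c (projr x)"
  shows "inserts_to (a,b,c,h) (length L, b, c, interleave L h)"
  using assms
proof (induction "length (filter (\<lambda>x. \<not> isl x) L)" arbitrary: L)
  case 0
  then have "\<forall>x\<in>set L. isl x" by (metis filter_empty_conv length_0_conv)
  then have L: "map projl L = [0..<a]" using 0 by (simp add: filter_id_conv)
  then have "length L = a" by (metis length_map length_upt diff_zero)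
  moreover have "L ! i = Inl i" if "i < a" for i
    using L \<open>\<forall>x\<in>set L. isl x\<close> that \<open>length L = a\<close>
    by (metis add_0 isl_def nth_map nth_mem nth_upt sum.collapse(1))
  ultimately show ?case
    by (intro inserts_to_box_eq[OF inserts_to_refl]) (auto simp: box_eq_def interleave_def)
next
  case (Suc n)
  then obtain L1 x L2 where L: "L = L1 @ x # L2" and x: "\<not> isl x" and L2: "\<forall>z\<in>set L2. isl z"
    using split_list_last_prop[of L "\<lambda>x. \<not> isl x"] by (metis filter_False length_0_conv nat.distinct(1))
  have "n = length (filter (\<lambda>x. \<not> isl x) (L1 @ L2))"
    using Suc.hyps(2) x L2 unfolding L by (simp add: filter_empty_conv)
  moreover have "map projl (filter isl (L1 @ L2)) = [0..<a]" using Suc.prems(1) x unfolding L by simp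
  moreover have "\<forall>x\<in>set (L1 @ L2). \<not> isl x \<longrightarrow> signed_subperm b c (projr x)"
    using Suc.prems(2) unfolding L by auto
  ultimately have IH: "inserts_to (a,b,c,h) (length (L1 @ L2), b, c, interleave (L1 @ L2) h)"
    by (rule Suc.hyps(1))
  have "signed_subperm b c (projr x)" using Suc.prems(2) x unfolding L by auto
  then have "insert_plane (length (L1 @ L2), b, c, interleave (L1 @ L2) h)
     (Suc (length (L1 @ L2)), b, c, \<lambda>i j l. if i = length L1 then projr x j l
       else if i < length L1 then interleave (L1 @ L2) h i j l else interleave (L1 @ L2) h (i - 1) j l)"
    by (intro insert_plane.row_vertical) auto
  from inserts_to_insert_plane[OF this interleave_insert_last[OF x L2]] show ?case
    unfolding L by (rule inserts_to_trans[OF IH])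
qed

section \<open>Lines along the three axes\<close>

definition sign_hmat :: "nat \<Rightarrow> nat \<Rightarrow> nat \<Rightarrow> hmat \<Rightarrow> bool" where
  "sign_hmat a b c h \<longleftrightarrow> (\<forall>i<a. \<forall>j<b. \<forall>l<c. h i j l \<in> {0,1,-1})"

definition lines1 :: "(nat \<Rightarrow> (nat \<Rightarrow> int) \<Rightarrow> bool) \<Rightarrow> nat \<Rightarrow> nat \<Rightarrow> nat \<Rightarrow> hmat \<Rightarrow> bool" where
  "lines1 \<Phi> a b c h \<longleftrightarrow> (\<forall>j<b. \<forall>l<c. \<Phi> a (\<lambda>i. h i j l))"

definition lines2 :: "(nat \<Rightarrow> (nat \<Rightarrow> int) \<Rightarrow> bool) \<Rightarrow> nat \<Rightarrow> nat \<Rightarrow> nat \<Rightarrow> hmat \<Rightarrow> bool" where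
  "lines2 \<Phi> a b c h \<longleftrightarrow> (\<forall>i<a. \<forall>l<c. \<Phi> b (\<lambda>j. h i j l))"

definition lines3 :: "(nat \<Rightarrow> (nat \<Rightarrow> int) \<Rightarrow> bool) \<Rightarrow> nat \<Rightarrow> nat \<Rightarrow> nat \<Rightarrow> hmat \<Rightarrow> bool" where
  "lines3 \<Phi> a b c h \<longleftrightarrow> (\<forall>i<a. \<forall>j<b. \<Phi> c (\<lambda>l. h i j l))"

lemma lines1_mono: "lines1 \<Phi> a b c h \<Longrightarrow> (\<And>n g. \<Phi> n g \<Longrightarrow> \<Psi> n g) \<Longrightarrow> lines1 \<Psi> a b c h"
  unfolding lines1_def by blast

lemma lines2_mono: "lines2 \<Phi> a b c h \<Longrightarrow> (\<And>n g. \<Phi> n g \<Longrightarrow> \<Psi> n g) \<Longrightarrow> lines2 \<Psi> a b c h"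
  unfolding lines2_def by blast

lemma lines3_mono: "lines3 \<Phi> a b c h \<Longrightarrow> (\<And>n g. \<Phi> n g \<Longrightarrow> \<Psi> n g) \<Longrightarrow> lines3 \<Psi> a b c h"
  unfolding lines3_def by blast

definition swap12 :: "hmat \<Rightarrow> hmat" where "swap12 h = (\<lambda>i j l. h j i l)"
definition swap13 :: "hmat \<Rightarrow> hmat" where "swap13 h = (\<lambda>i j l. h l j i)"

lemma swap12_swap12 [simp]: "swap12 (swap12 h) = h" by (simp add: swap12_def)
lemma swap13_swap13 [simp]: "swap13 (swap13 h) = h" by (simp add: swap13_def)

lemma sign_hmat_swap12: "sign_hmat a b c (swap12 h) = sign_hmat b a c h"
  by (auto simp: sign_hmat_def swap12_def)
lemma sign_hmat_swap13: "sign_hmat a b c (swap13 h) = sign_hmat c b a h"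
  by (auto simp: sign_hmat_def swap13_def)

lemma lines1_swap12: "lines1 \<Phi> a b c (swap12 h) = lines2 \<Phi> b a c h"
  by (auto simp: lines1_def lines2_def swap12_def)
lemma lines2_swap12: "lines2 \<Phi> a b c (swap12 h) = lines1 \<Phi> b a c h"
  by (auto simp: lines1_def lines2_def swap12_def)
lemma lines3_swap12: "lines3 \<Phi> a b c (swap12 h) = lines3 \<Phi> b a c h"
  by (auto simp: lines3_def swap12_def)
lemma lines1_swap13: "lines1 \<Phi> a b c (swap13 h) = lines3 \<Phi> c b a h"
  by (auto simp: lines1_def lines3_def swap13_def)
lemma lines2_swap13: "lines2 \<Phi> a b c (swap13 h) = lines2 \<Phi> c b a h"
  by (auto simp: lines2_def swap13_def)
lemma lines3_swap13: "lines3 \<Phi> a b c (swap13 h) = lines1 \<Phi> c b a h"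
  by (auto simp: lines1_def lines3_def swap13_def)

lemma signed_subperm_transpose: "signed_subperm m n P \<Longrightarrow> signed_subperm n m (\<lambda>i j. P j i)"
  unfolding signed_subperm_def subperm_def by blast

definition swap12_sized :: "sized_hmat \<Rightarrow> sized_hmat" where
  "swap12_sized X = (case X of (a,b,c,h) \<Rightarrow> (b,a,c,swap12 h))"
definition swap13_sized :: "sized_hmat \<Rightarrow> sized_hmat" where
  "swap13_sized X = (case X of (a,b,c,h) \<Rightarrow> (c,b,a,swap13 h))"

lemma insert_plane_swap12: "insert_plane X Y \<Longrightarrow> insert_plane (swap12_sized X) (swap12_sized Y)"
proof (induction rule: insert_plane.induct)
  case (row_vertical t m n k P A)
  show ?case unfolding swap12_sized_def swap12_def prod.case
    using insert_plane.column_vertical[of t m n k P "\<lambda>i j l. A j i l"] row_vertical by simp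
next
  case (column_vertical t n m k P A)
  show ?case unfolding swap12_sized_def swap12_def prod.case
    using insert_plane.row_vertical[of t n m k P "\<lambda>i j l. A j i l"] column_vertical by simp
next
  case (horizontal t k m n P A)
  show ?case unfolding swap12_sized_def swap12_def prod.case
    using insert_plane.horizontal[of t k n m "\<lambda>i j. P j i" "\<lambda>i j l. A j i l"] horizontal
      signed_subperm_transpose by simp
qed

lemma insert_plane_swap13: "insert_plane X Y \<Longrightarrow> insert_plane (swap13_sized X) (swap13_sized Y)"
proof (induction rule: insert_plane.induct)
  case (row_vertical t m n k P A)
  show ?case unfolding swap13_sized_def swap13_def prod.case
    using insert_plane.horizontal[of t m k n "\<lambda>i j. P j i" "\<lambda>i j l. A l j i"] row_vertical
      signed_subperm_transpose by simp
next
  case (column_vertical t n m k P A)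
  show ?case unfolding swap13_sized_def swap13_def prod.case
    using insert_plane.column_vertical[of t n k m "\<lambda>i j. P j i" "\<lambda>i j l. A l j i"] column_vertical
      signed_subperm_transpose by simp
next
  case (horizontal t k m n P A)
  show ?case unfolding swap13_sized_def swap13_def prod.case
    using insert_plane.row_vertical[of t k n m "\<lambda>i j. P j i" "\<lambda>i j l. A l j i"] horizontal
      signed_subperm_transpose by simp
qed

lemma inserts_to_swap_sized:
  assumes swap_step: "\<And>X Y. insert_plane X Y \<Longrightarrow> insert_plane (f X) (f Y)"
    and swap_box_eq: "\<And>X Y. box_eq X Y \<Longrightarrow> box_eq (f X) (f Y)"
    and "inserts_to X Y"
  shows "inserts_to (f X) (f Y)"
proof -
  obtain Y' where Y': "insert_plane\<^sup>*\<^sup>* X Y'" "box_eq Y' Y"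
    using assms(3) unfolding inserts_to_def by blast
  from Y'(1) have "insert_plane\<^sup>*\<^sup>* (f X) (f Y')"
    by (induction rule: rtranclp_induct) (auto intro: rtranclp.rtrancl_into_rtrancl swap_step)
  then show ?thesis unfolding inserts_to_def using swap_box_eq[OF Y'(2)] by blast
qed

lemma inserts_to_swap12:
  "inserts_to (b,a,c,swap12 h) (b',a',c',swap12 h') \<Longrightarrow> inserts_to (a,b,c,h) (a',b',c',h')"
  using inserts_to_swap_sized[OF insert_plane_swap12, where X="(b,a,c,swap12 h)" and Y="(b',a',c',swap12 h')"]
  by (force simp: swap12_sized_def swap12_def box_eq_def)

lemma inserts_to_swap13:
  "inserts_to (c,b,a,swap13 h) (c',b',a',swap13 h') \<Longrightarrow> inserts_to (a,b,c,h) (a',b',c',h')"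
  using inserts_to_swap_sized[OF insert_plane_swap13, where X="(c,b,a,swap13 h)" and Y="(c',b',a',swap13 h')"]
  by (force simp: swap13_sized_def swap13_def box_eq_def)

section \<open>Prefix sums of lines\<close>

definition psum :: "(nat \<Rightarrow> int) \<Rightarrow> nat \<Rightarrow> int" where
  "psum g k = (\<Sum>i<k. g i)"

definition partial_01 :: "nat \<Rightarrow> (nat \<Rightarrow> int) \<Rightarrow> bool" where
  "partial_01 n g \<longleftrightarrow> (\<forall>k\<le>n. psum g k \<in> {0,1})"

definition at_most_one_nz :: "nat \<Rightarrow> (nat \<Rightarrow> int) \<Rightarrow> bool" where
  "at_most_one_nz n g \<longleftrightarrow> (\<forall>i<n. \<forall>i'<n. g i \<noteq> 0 \<longrightarrow> g i' \<noteq> 0 \<longrightarrow> i = i')"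

definition ashm_line :: "nat \<Rightarrow> (nat \<Rightarrow> int) \<Rightarrow> bool" where
  "ashm_line n g \<longleftrightarrow> partial_01 n g \<and> psum g n = 1"

lemma psum_0 [simp]: "psum g 0 = 0"
  by (simp add: psum_def)

lemma psum_Suc: "psum g (Suc k) = psum g k + g k"
  by (simp add: psum_def)

lemma psum_add: "psum f (m + t) = psum f m + (\<Sum>r<t. f (m + r))"
  by (induction t) (auto simp: psum_Suc)

lemma psum_cong: "(\<forall>i<k. f i = g i) \<Longrightarrow> psum f k = psum g k"
  unfolding psum_def by (rule sum.cong) auto

lemma psum_single:
  assumes "i0 < m" "\<forall>i<m. i \<noteq> i0 \<longrightarrow> g i = 0"
  shows "psum g m = g i0"
proof -
  have "psum g m = g i0 + (\<Sum>i\<in>{..<m} - {i0}. g i)"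
    unfolding psum_def using assms(1) by (simp add: sum.remove)
  also have "(\<Sum>i\<in>{..<m} - {i0}. g i) = 0"
    using assms(2) by (intro sum.neutral) auto
  finally show ?thesis by simp
qed

lemma psum_mono_nonneg:
  assumes "\<forall>i<m. g i \<ge> 0" "d \<le> m"
  shows "0 \<le> psum g d \<and> psum g d \<le> psum g m"
proof -
  obtain e where e: "m = d + e" using assms(2) le_Suc_ex by blast
  have "psum g m = psum g d + (\<Sum>r<e. g (d + r))" unfolding e by (rule psum_add)
  moreover have "(\<Sum>r<e. g (d + r)) \<ge> 0" using assms(1) e by (intro sum_nonneg) auto
  moreover have "psum g d \<ge> 0" unfolding psum_def using assms by (intro sum_nonneg) auto
  ultimately show ?thesis by simp
qed

lemma partial_01_zero: "partial_01 n (\<lambda>_. 0)"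
  by (auto simp: partial_01_def psum_def)

lemma partial_01_pad:
  assumes "partial_01 n g"
  shows "partial_01 (n + t) (\<lambda>i. if i < n then g i else 0)"
  unfolding partial_01_def
proof (intro allI impI)
  fix k assume k: "k \<le> n + t"
  show "psum (\<lambda>i. if i < n then g i else 0) k \<in> {0,1}"
  proof (cases "k \<le> n")
    case True
    then have "psum (\<lambda>i. if i < n then g i else 0) k = psum g k" by (intro psum_cong) auto
    then show ?thesis using assms True by (simp add: partial_01_def)
  next
    case False
    then obtain d where "k = n + d" by (metis le_add_diff_inverse nat_le_linear)
    then have "psum (\<lambda>i. if i < n then g i else 0) k = psum g n"
      by (simp add: psum_add psum_cong)
    then show ?thesis using assms by (simp add: partial_01_def)
  qed
qed

lemma at_most_one_nz_psum:
  assumes "at_most_one_nz n g" "k \<le> n"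
  shows "psum g k \<in> {0} \<union> g ` {..<k}"
proof (cases "\<exists>i<k. g i \<noteq> 0")
  case True
  then obtain s where s: "s < k" "g s \<noteq> 0" by blast
  have "\<forall>i<k. i \<noteq> s \<longrightarrow> g i = 0"
    using assms s unfolding at_most_one_nz_def by (meson order.strict_trans2)
  then have "psum g k = g s" by (rule psum_single[OF s(1)])
  then show ?thesis using s by auto
next
  case False
  then show ?thesis unfolding psum_def by simp
qed

lemma at_most_one_nz_partial_01:
  assumes "at_most_one_nz n g" "\<forall>i<n. g i \<in> {0,1}"
  shows "partial_01 n g"
  unfolding partial_01_def
proof (intro allI impI)
  fix k assume "k \<le> n"
  then have "psum g k \<in> {0} \<union> g ` {..<k}" by (rule at_most_one_nz_psum[OF assms(1)])
  moreover have "g ` {..<k} \<subseteq> {0,1}"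
    using assms(2) \<open>k \<le> n\<close> by (auto simp: image_subset_iff)
  ultimately show "psum g k \<in> {0,1}" by blast
qed

definition nonzeros :: "(nat \<Rightarrow> int) \<Rightarrow> nat \<Rightarrow> int list" where
  "nonzeros g n = filter (\<lambda>x. x \<noteq> 0) (map g [0..<n])"

lemma nonzeros_alternate:
  assumes "\<forall>i<n. g i \<in> {0,1,-1}" "partial_01 n g"
  shows "(\<forall>t<length (nonzeros g n). nonzeros g n ! t = (-1)^t) \<and>
         psum g n = (if even (length (nonzeros g n)) then 0 else 1)"
  using assms
proof (induction n)
  case 0 then show ?case by (simp add: nonzeros_def)
next
  case (Suc n)
  define xs where "xs = nonzeros g n"
  have IH: "(\<forall>t<length xs. xs ! t = (-1)^t) \<and> psum g n = (if even (length xs) then 0 else 1)"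
    using Suc by (auto simp: xs_def partial_01_def)
  have step: "nonzeros g (Suc n) = xs @ (if g n = 0 then [] else [g n])"
    by (simp add: xs_def nonzeros_def)
  have "psum g n + g n \<in> {0,1}" using Suc.prems(2) by (auto simp: partial_01_def psum_Suc)
  then have "g n = 0 \<or> g n = (-1) ^ length xs"
    using Suc.prems(1) IH by (auto split: if_splits)
  show ?case
  proof (cases "g n = 0")
    case True
    then show ?thesis using IH unfolding step by (simp add: psum_Suc)
  next
    case False
    then have gn: "g n = (-1) ^ length xs" using \<open>g n = 0 \<or> g n = (-1) ^ length xs\<close> by simp
    have "\<forall>t<Suc (length xs). (xs @ [g n]) ! t = (-1)^t"
      using IH gn by (auto simp: nth_append less_Suc_eq)
    moreover have "psum g (Suc n) = (if even (Suc (length xs)) then 0 else 1)"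
      using IH gn by (auto simp: psum_Suc)
    ultimately show ?thesis using False unfolding step by simp
  qed
qed

lemma ashm_line_alt_line:
  assumes "\<forall>i<n. g i \<in> {0,1,-1}" "ashm_line n g"
  shows "alt_line n g"
proof -
  define xs where "xs = nonzeros g n"
  have alt: "\<forall>t<length xs. xs ! t = (-1)^t" and odd: "odd (length xs)"
    using nonzeros_alternate[of n g] assms unfolding ashm_line_def xs_def by (auto split: if_splits)
  then have "xs \<noteq> []" by auto
  moreover have "hd xs = 1" using alt \<open>xs \<noteq> []\<close> by (simp add: hd_conv_nth)
  moreover have "last xs = 1" using alt odd \<open>xs \<noteq> []\<close> by (simp add: last_conv_nth)
  moreover have "\<forall>t. Suc t < length xs \<longrightarrow> xs ! Suc t = - (xs ! t)" using alt by simp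
  ultimately show ?thesis unfolding alt_line_def Let_def xs_def nonzeros_def by simp
qed

lemma ashm_line_cong:
  assumes "\<And>i. i < n \<Longrightarrow> f i = g i" "ashm_line n g"
  shows "ashm_line n f"
proof -
  have "psum f k = psum g k" if "k \<le> n" for k using assms(1) that by (intro psum_cong) auto
  then show ?thesis using assms(2) unfolding ashm_line_def partial_01_def by simp
qed

lemma ashm_line_append:
  assumes f: "partial_01 n f" and g: "\<forall>i<m. g i \<in> {0,1}" "at_most_one_nz m g"
    and sum: "psum g m = 1 - psum f n"
  shows "ashm_line (n + m) (\<lambda>i. if i < n then f i else g (i - n))"
proof -
  let ?u = "\<lambda>i. if i < n then f i else g (i - n)"
  have f01: "psum f n \<in> {0,1}" using f by (auto simp: partial_01_def)
  have split: "psum ?u (n + d) = psum f n + psum g d" for d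
    by (simp add: psum_add psum_cong) (simp add: psum_def)
  have "psum ?u k \<in> {0,1}" if k: "k \<le> n + m" for k
  proof (cases "k \<le> n")
    case True
    then have "psum ?u k = psum f k" by (intro psum_cong) auto
    then show ?thesis using f True by (simp add: partial_01_def)
  next
    case False
    then obtain d where d: "k = n + d" "d \<le> m" using k by (metis add_le_cancel_left le_add_diff_inverse nat_le_linear)
    have "psum g d \<in> {0,1}" using at_most_one_nz_partial_01[OF g(2,1)] d(2) by (auto simp: partial_01_def)
    moreover have "0 \<le> psum g d \<and> psum g d \<le> psum g m" using g(1) d(2) by (intro psum_mono_nonneg) auto
    ultimately show ?thesis using d split f01 sum by auto
  qed
  moreover have "psum ?u (n + m) = 1" using split sum by simp
  ultimately show ?thesis unfolding ashm_line_def partial_01_def by simp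
qed

lemma ashm_line_indicator:
  assumes "i0 < m"
  shows "ashm_line m (\<lambda>i. if i = i0 then 1 else 0)"
proof -
  have "at_most_one_nz m (\<lambda>i. if i = i0 then 1 else 0)" by (simp add: at_most_one_nz_def)
  then have "partial_01 m (\<lambda>i. if i = i0 then 1 else 0)" by (rule at_most_one_nz_partial_01) simp
  moreover have "psum (\<lambda>i. if i = i0 then 1 else 0) m = 1"
    using assms by (subst psum_single[of i0]) auto
  ultimately show ?thesis by (simp add: ashm_line_def)
qed

section \<open>Correction passes\<close>

lemma add_mod_inj:
  fixes j j' l M :: nat
  assumes "j < M" "j' < M" "(j + l) mod M = (j' + l) mod M"
  shows "j = j'"
proof -
  have "j = j'" if "j \<le> j'" "(j + l) mod M = (j' + l) mod M" "j < M" "j' < M" for j j' :: nat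
  proof -
    have "M dvd j' - j" using that mod_eq_dvd_iff_nat[of "j + l" "j' + l" M] by simp
    moreover have "j' - j < M" using that by simp
    ultimately have "j' - j = 0" using nat_dvd_not_less by (metis neq0_conv)
    then show ?thesis using that by simp
  qed
  then show ?thesis using assms by (metis nat_le_linear)
qed

lemma add_mod_inj':
  fixes j l l' M :: nat
  shows "l < M \<Longrightarrow> l' < M \<Longrightarrow> (j + l) mod M = (j + l') mod M \<Longrightarrow> l = l'"
  using add_mod_inj[of l M l' j] by (simp add: add.commute)

text \<open>Scan a line from the left, keeping the running sum in \<open>{0, 1}\<close> by skipping every
  entry that would leave it; \<open>clamp_corr g p\<close> is the entry that has to be inserted in front
  of position \<open>p\<close> to cancel a skipped one.\<close>
primrec clamp_sum :: "(nat \<Rightarrow> int) \<Rightarrow> nat \<Rightarrow> int" where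
  "clamp_sum g 0 = 0"
| "clamp_sum g (Suc p) = (if clamp_sum g p + g p \<in> {0,1} then clamp_sum g p + g p else clamp_sum g p)"

definition clamp_corr :: "(nat \<Rightarrow> int) \<Rightarrow> nat \<Rightarrow> int" where
  "clamp_corr g p = (if clamp_sum g p + g p \<in> {0,1} then 0 else - g p)"

lemma clamp_sum_01: "clamp_sum g p \<in> {0,1}"
  by (induction p) auto

lemma clamp_sum_Suc_eq: "clamp_sum g (Suc p) = clamp_sum g p + clamp_corr g p + g p"
  by (simp add: clamp_corr_def)

lemma clamp_corr_sign: "g p \<in> {0,1,-1} \<Longrightarrow> clamp_corr g p \<in> {0,1,-1}"
  by (auto simp: clamp_corr_def)

lemma clamp_corr_partial: "g p \<in> {0,1,-1} \<Longrightarrow> clamp_corr g p \<noteq> 0 \<Longrightarrow> clamp_sum g p + clamp_corr g p \<in> {0,1}"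
  using clamp_sum_01[of g p] by (auto simp: clamp_corr_def split: if_splits)

lemma clamp_sum_eq_psum: "partial_01 n g \<Longrightarrow> p \<le> n \<Longrightarrow> clamp_sum g p = psum g p"
  by (induction p) (auto simp: partial_01_def psum_Suc)

lemma clamp_sum_one_imp: "clamp_sum g p = 1 \<Longrightarrow> \<exists>p'<p. g p' = 1"
proof (induction p)
  case (Suc p)
  then show ?case
    using clamp_sum_01[of g p] by (cases "clamp_sum g p = 1") (auto split: if_splits intro: less_SucI)
qed simp

lemma clamp_corr_nonneg:
  assumes "partial_01 n g \<or> at_most_one_nz n g" "p < n" "g p \<in> {0,1,-1}"
  shows "clamp_corr g p \<noteq> -1"
proof
  assume "clamp_corr g p = -1"
  then have sum1: "clamp_sum g p = 1" and g1: "g p = 1"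
    using assms(3) clamp_sum_01[of g p] by (auto simp: clamp_corr_def split: if_splits)
  show False using assms(1)
  proof
    assume "partial_01 n g"
    then show False
      using clamp_sum_eq_psum[of n g p] sum1 g1 assms(2)
      by (auto simp: partial_01_def psum_Suc dest: spec[of _ "Suc p"])
  next
    assume "at_most_one_nz n g"
    then show False
      using clamp_sum_one_imp[OF sum1] g1 assms(2) unfolding at_most_one_nz_def
      by (metis dual_order.strict_trans less_irrefl one_neq_zero)
  qed
qed

lemma nth_concat_blocks:
  assumes "\<forall>p. length (f p) = K" "p < a" "r < K"
  shows "concat (map f [0..<a]) ! (p*K + r) = f p ! r"
  using assms(2)
proof (induction a)
  case (Suc a)
  have len: "length (concat (map f [0..<a])) = a * K"
    using assms(1) by (simp add: length_concat comp_def sum_list_triv)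
  show ?case
  proof (cases "p < a")
    case True
    have "p * K + r < Suc p * K" using assms(3) by simp
    also have "\<dots> \<le> a * K" using True by (intro mult_le_mono1) simp
    finally show ?thesis using Suc.IH[OF True] len by (simp add: nth_append)
  next
    case False
    then have "p * K + r = length (concat (map f [0..<a])) + r" using len Suc.prems by simp
    moreover have "p = a" using False Suc.prems by simp
    ultimately show ?thesis by (simp add: nth_append_length_plus)
  qed
qed simp

text \<open>Before old plane \<open>p\<close>, \<open>2M\<close> new planes carry the corrections
  \<open>clamp_corr (\<lambda>q. h q j l) p\<close>: a \<open>+1\<close> goes to new plane \<open>(j + l) mod M\<close>, a \<open>-1\<close> to
  new plane \<open>M + (j + l) mod M\<close>. Spreading the corrections over broken diagonals makes every
  new plane a signed subpermutation matrix.\<close>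
definition corr_plane :: "nat \<Rightarrow> hmat \<Rightarrow> nat \<Rightarrow> nat \<Rightarrow> nat \<Rightarrow> nat \<Rightarrow> int" where
  "corr_plane M h p r j l = (let s = (if r < M then 1 else -1 :: int) in
      if clamp_corr (\<lambda>q. h q j l) p = s \<and> (j + l) mod M = r mod M then s else 0)"

definition corrected :: "nat \<Rightarrow> hmat \<Rightarrow> hmat" where
  "corrected M h i j l = (if i mod Suc (2*M) < 2*M
      then corr_plane M h (i div Suc (2*M)) (i mod Suc (2*M)) j l
      else h (i div Suc (2*M)) j l)"

definition corr_layout :: "nat \<Rightarrow> nat \<Rightarrow> hmat \<Rightarrow> (nat + (nat \<Rightarrow> nat \<Rightarrow> int)) list" where
  "corr_layout M a h =
     concat (map (\<lambda>p. map (\<lambda>r. Inr (corr_plane M h p r)) [0..<2*M] @ [Inl p]) [0..<a])"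

lemma corr_plane_subperm:
  assumes "b \<le> M" "c \<le> M"
  shows "subperm b c (\<lambda>j l. (if r < M then 1 else -1) * corr_plane M h p r j l)"
  unfolding subperm_def
proof (intro conjI allI impI)
  fix j l assume "j < b" "l < c"
  show "(if r < M then 1 else -1) * corr_plane M h p r j l \<in> {0,1}"
    by (auto simp: corr_plane_def Let_def)
next
  fix j l l' assume "j < b" "l < c" "l' < c"
    and "(if r < M then 1 else -1) * corr_plane M h p r j l = 1 \<and>
         (if r < M then 1 else -1) * corr_plane M h p r j l' = 1"
  then show "l = l'"
    using add_mod_inj'[of l M l' j] assms by (auto simp: corr_plane_def Let_def split: if_splits)
next
  fix l j j' assume "l < c" "j < b" "j' < b"
    and "(if r < M then 1 else -1) * corr_plane M h p r j l = 1 \<and>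
         (if r < M then 1 else -1) * corr_plane M h p r j' l = 1"
  then show "j = j'"
    using add_mod_inj[of j M j' l] assms by (auto simp: corr_plane_def Let_def split: if_splits)
qed

lemma corr_plane_signed_subperm:
  "b \<le> M \<Longrightarrow> c \<le> M \<Longrightarrow> signed_subperm b c (corr_plane M h p r)"
  using corr_plane_subperm[of b M c r h p] unfolding signed_subperm_def by (cases "r < M") simp_all

lemma corr_plane_at_most_one_nz2: "b \<le> M \<Longrightarrow> at_most_one_nz b (\<lambda>j. corr_plane M h p r j l)"
  unfolding at_most_one_nz_def
proof (intro allI impI)
  fix j j' assume "b \<le> M" "j < b" "j' < b" "corr_plane M h p r j l \<noteq> 0" "corr_plane M h p r j' l \<noteq> 0"
  then show "j = j'"
    using add_mod_inj[of j M j' l] by (auto simp: corr_plane_def Let_def split: if_splits)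
qed

lemma corr_plane_at_most_one_nz3: "c \<le> M \<Longrightarrow> at_most_one_nz c (\<lambda>l. corr_plane M h p r j l)"
  unfolding at_most_one_nz_def
proof (intro allI impI)
  fix l l' assume "c \<le> M" "l < c" "l' < c" "corr_plane M h p r j l \<noteq> 0" "corr_plane M h p r j l' \<noteq> 0"
  then show "l = l'"
    using add_mod_inj'[of l M l' j] by (auto simp: corr_plane_def Let_def split: if_splits)
qed

lemma corrected_block:
  assumes "r < Suc (2*M)"
  shows "corrected M h (p * Suc (2*M) + r) j l = (if r < 2*M then corr_plane M h p r j l else h p j l)"
proof -
  define K where "K = Suc (2*M)"
  have "(p * K + r) div K = p" "(p * K + r) mod K = r" using assms unfolding K_def[symmetric] by auto
  then show ?thesis unfolding corrected_def K_def[symmetric] by (simp add: K_def)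
qed

lemma corrected_plane_cases:
  assumes "i < a * Suc (2*M)"
  obtains p where "p < a" "\<And>j l. corrected M h i j l = h p j l"
  | p r where "p < a" "r < 2*M" "\<And>j l. corrected M h i j l = corr_plane M h p r j l"
proof -
  have "i div Suc (2*M) < a" using assms by (simp add: less_mult_imp_div_less)
  then show ?thesis using that unfolding corrected_def by (cases "i mod Suc (2*M) < 2*M") auto
qed

lemma corr_layout_length: "length (corr_layout M a h) = a * Suc (2*M)"
  by (simp add: corr_layout_def length_concat comp_def sum_list_triv)

lemma interleave_corr_layout:
  assumes "i < a * Suc (2*M)"
  shows "interleave (corr_layout M a h) h i j l = corrected M h i j l"
proof -
  define p r where "p = i div Suc (2*M)" and "r = i mod Suc (2*M)"
  have i: "i = p * Suc (2*M) + r" and r: "r < Suc (2*M)"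
    unfolding p_def r_def by (simp_all only: div_mult_mod_eq mod_less_divisor zero_less_Suc)
  have "p < a" unfolding p_def using assms by (simp add: less_mult_imp_div_less)
  then have "corr_layout M a h ! i = (if r < 2*M then Inr (corr_plane M h p r) else Inl p)"
    unfolding corr_layout_def i using r by (subst nth_concat_blocks) (auto simp: nth_append)
  then show ?thesis unfolding interleave_def using corrected_block[OF r] i by simp
qed

lemma inserts_to_corrected:
  assumes "b \<le> M" "c \<le> M"
  shows "inserts_to (a,b,c,h) (a * Suc (2*M), b, c, corrected M h)"
proof -
  have "map projl (filter isl (corr_layout M a h)) = [0..<a]"
  proof (induction a)
    case (Suc a)
    have "filter isl (map (\<lambda>r. Inr (corr_plane M h a r)) [0..<2*M]
            :: (nat + (nat \<Rightarrow> nat \<Rightarrow> int)) list) = []"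
      by (induction M) auto
    then show ?case using Suc by (simp add: corr_layout_def)
  qed (simp add: corr_layout_def)
  moreover have "\<forall>x\<in>set (corr_layout M a h). \<not> isl x \<longrightarrow> signed_subperm b c (projr x)"
    using corr_plane_signed_subperm[OF assms] by (auto simp: corr_layout_def)
  ultimately have "inserts_to (a,b,c,h) (length (corr_layout M a h), b, c, interleave (corr_layout M a h) h)"
    by (rule inserts_to_interleave)
  then show ?thesis
    by (rule inserts_to_box_eq) (simp add: box_eq_iff corr_layout_length interleave_corr_layout)
qed

lemma sign_hmat_corrected: "sign_hmat a b c h \<Longrightarrow> sign_hmat (a * Suc (2*M)) b c (corrected M h)"
  unfolding sign_hmat_def
proof (intro allI impI)
  fix i j l assume h: "\<forall>i<a. \<forall>j<b. \<forall>l<c. h i j l \<in> {0, 1, - 1}"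
    and i: "i < a * Suc (2*M)" and jl: "j < b" "l < c"
  show "corrected M h i j l \<in> {0, 1, - 1}"
  proof (rule corrected_plane_cases[OF i])
    fix p assume "p < a" "\<And>j l. corrected M h i j l = h p j l"
    then show ?thesis using h jl by simp
  next
    fix p r assume "\<And>j l. corrected M h i j l = corr_plane M h p r j l"
    then show ?thesis by (simp add: corr_plane_def Let_def)
  qed
qed

lemma corr_plane_sum:
  assumes "0 < M" "t \<le> 2*M" "clamp_corr (\<lambda>q. h q j l) p \<in> {0,1,-1}"
  shows "(\<Sum>r<t. corr_plane M h p r j l) \<in> {0, clamp_corr (\<lambda>q. h q j l) p}"
    and "t = 2*M \<Longrightarrow> (\<Sum>r<t. corr_plane M h p r j l) = clamp_corr (\<lambda>q. h q j l) p"
proof -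
  define w where "w = clamp_corr (\<lambda>q. h q j l) p"
  define s where "s = (if w = 1 then (j+l) mod M else M + (j+l) mod M)"
  have jl: "(j+l) mod M < M" using assms(1) by simp
  then have s: "s < 2*M" unfolding s_def by auto
  have slot: "corr_plane M h p r j l = (if w \<noteq> 0 \<and> r = s then w else 0)" if "r < 2*M" for r
  proof (cases "r < M")
    case False
    then have "r mod M = r - M" using that by (simp add: le_mod_geq)
    then show ?thesis using False jl assms(3) by (auto simp: corr_plane_def Let_def w_def s_def)
  qed (use jl assms(3) in \<open>auto simp: corr_plane_def Let_def w_def s_def\<close>)
  have "(\<Sum>r<t. corr_plane M h p r j l) = (\<Sum>r<t. if w \<noteq> 0 \<and> r = s then w else 0)"
    using slot assms(2) by (intro sum.cong) auto
  also have "\<dots> = (if s < t \<and> w \<noteq> 0 then w else 0)"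
    by (cases "w = 0") (simp_all add: sum.delta')
  finally have S: "(\<Sum>r<t. corr_plane M h p r j l) = (if s < t \<and> w \<noteq> 0 then w else 0)" .
  then show "(\<Sum>r<t. corr_plane M h p r j l) \<in> {0, clamp_corr (\<lambda>q. h q j l) p}"
    unfolding w_def by auto
  show "t = 2*M \<Longrightarrow> (\<Sum>r<t. corr_plane M h p r j l) = clamp_corr (\<lambda>q. h q j l) p"
    using S s unfolding w_def by auto
qed

lemma sum_corrected_block:
  shows "t \<le> 2*M \<Longrightarrow> (\<Sum>r<t. corrected M h (p * Suc (2*M) + r) j l) = (\<Sum>r<t. corr_plane M h p r j l)"
proof (rule sum.cong[OF refl])
  fix r assume "t \<le> 2*M" "r \<in> {..<t}"
  then show "corrected M h (p * Suc (2*M) + r) j l = corr_plane M h p r j l"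
    using corrected_block[of r M h p j l] by simp
qed

lemma psum_corrected:
  assumes "0 < M" "p \<le> a" "\<forall>q<a. h q j l \<in> {0,1,-1}" "t \<le> 2*M"
  shows "psum (\<lambda>i. corrected M h i j l) (p * Suc (2*M) + t) =
           clamp_sum (\<lambda>q. h q j l) p + (\<Sum>r<t. corr_plane M h p r j l)"
  using assms(2,4)
proof (induction p arbitrary: t)
  case 0
  then show ?case using sum_corrected_block[of t M h 0] by (simp add: psum_def)
next
  case (Suc p)
  let ?K = "Suc (2*M)" and ?g = "\<lambda>q. h q j l" and ?F = "\<lambda>i. corrected M h i j l"
  have sign: "clamp_corr ?g p \<in> {0,1,-1}" using clamp_corr_sign[of ?g p] assms(3) Suc.prems by auto
  have "psum ?F (Suc p * ?K + t) = psum ?F (Suc (p * ?K + 2*M) + t)"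
    by (simp add: ac_simps)
  also have "\<dots> = psum ?F (Suc (p * ?K + 2*M)) + (\<Sum>r<t. ?F (Suc (p * ?K + 2*M) + r))"
    by (rule psum_add)
  also have "\<dots> = psum ?F (p * ?K + 2*M) + ?F (p * ?K + 2*M) + (\<Sum>r<t. ?F (Suc p * ?K + r))"
    by (simp add: psum_Suc ac_simps)
  also have "\<dots> = clamp_sum ?g p + clamp_corr ?g p + h p j l + (\<Sum>r<t. corr_plane M h (Suc p) r j l)"
    using Suc.IH[of "2*M"] Suc.prems corr_plane_sum(2)[where h=h and j=j and l=l and p=p, OF assms(1) order.refl sign]
      corrected_block[of "2*M" M h p j l] sum_corrected_block[OF Suc.prems(2), of h "Suc p" j l]
    by simp
  also have "\<dots> = clamp_sum ?g (Suc p) + (\<Sum>r<t. corr_plane M h (Suc p) r j l)"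
    by (simp only: clamp_sum_Suc_eq)
  finally show ?case .
qed

lemma lines1_corrected:
  assumes "0 < M" "sign_hmat a b c h"
  shows "lines1 partial_01 (a * Suc (2*M)) b c (corrected M h)"
  unfolding lines1_def partial_01_def
proof (intro allI impI)
  fix j l k assume jl: "j < b" "l < c" and k: "k \<le> a * Suc (2*M)"
  let ?g = "\<lambda>q. h q j l"
  have g: "\<forall>q<a. h q j l \<in> {0,1,-1}" using assms(2) jl unfolding sign_hmat_def by auto
  define p t where "p = k div Suc (2*M)" and "t = k mod Suc (2*M)"
  have k_eq: "k = p * Suc (2*M) + t" and t: "t < Suc (2*M)"
    unfolding p_def t_def by (simp_all only: div_mult_mod_eq mod_less_divisor zero_less_Suc)
  show "psum (\<lambda>i. corrected M h i j l) k \<in> {0,1}"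
  proof (cases "p < a")
    case False
    have "p * Suc (2*M) \<le> a * Suc (2*M)" using k k_eq by linarith
    then have "p = a" using False by (simp only: mult_le_cancel2) simp
    moreover from this have "t = 0" using k k_eq by simp
    ultimately show ?thesis
      using psum_corrected[where h=h and j=j and l=l and t=0, OF assms(1) order.refl g] clamp_sum_01 k_eq by simp
  next
    case True
    have sign: "clamp_corr ?g p \<in> {0,1,-1}" using clamp_corr_sign[of ?g p] g True by auto
    have "psum (\<lambda>i. corrected M h i j l) k = clamp_sum ?g p + (\<Sum>r<t. corr_plane M h p r j l)"
      unfolding k_eq using True t by (intro psum_corrected[where h=h and j=j and l=l, OF assms(1) _ g]) auto
    moreover have "(\<Sum>r<t. corr_plane M h p r j l) \<in> {0, clamp_corr ?g p}"
      using t by (intro corr_plane_sum(1)[where h=h and j=j and l=l and p=p, OF assms(1) _ sign]) auto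
    moreover have "clamp_corr ?g p \<noteq> 0 \<Longrightarrow> clamp_sum ?g p + clamp_corr ?g p \<in> {0,1}"
      using clamp_corr_partial[of ?g p] g True by blast
    ultimately show ?thesis using clamp_sum_01[of ?g p] by (cases "clamp_corr ?g p = 0") auto
  qed
qed

lemma lines2_corrected:
  assumes "b \<le> M" "lines2 \<Phi> a b c h"
  shows "lines2 (\<lambda>n g. \<Phi> n g \<or> at_most_one_nz n g) (a * Suc (2*M)) b c (corrected M h)"
  unfolding lines2_def
proof (intro allI impI)
  fix i l assume i: "i < a * Suc (2*M)" and l: "l < c"
  show "\<Phi> b (\<lambda>j. corrected M h i j l) \<or> at_most_one_nz b (\<lambda>j. corrected M h i j l)"
  proof (rule corrected_plane_cases[OF i])
    fix p assume "p < a" "\<And>j l. corrected M h i j l = h p j l"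
    then show ?thesis using assms(2) l unfolding lines2_def by simp
  next
    fix p r assume "\<And>j l. corrected M h i j l = corr_plane M h p r j l"
    then show ?thesis using corr_plane_at_most_one_nz2[OF assms(1)] by simp
  qed
qed

lemma lines3_corrected:
  assumes "c \<le> M" "lines3 \<Phi> a b c h"
  shows "lines3 (\<lambda>n g. \<Phi> n g \<or> at_most_one_nz n g) (a * Suc (2*M)) b c (corrected M h)"
  unfolding lines3_def
proof (intro allI impI)
  fix i j assume i: "i < a * Suc (2*M)" and j: "j < b"
  show "\<Phi> c (\<lambda>l. corrected M h i j l) \<or> at_most_one_nz c (\<lambda>l. corrected M h i j l)"
  proof (rule corrected_plane_cases[OF i])
    fix p assume "p < a" "\<And>j l. corrected M h i j l = h p j l"
    then show ?thesis using assms(2) j unfolding lines3_def by simp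
  next
    fix p r assume "\<And>j l. corrected M h i j l = corr_plane M h p r j l"
    then show ?thesis using corr_plane_at_most_one_nz3[OF assms(1)] by simp
  qed
qed

abbreviation partial_01_or_single :: "nat \<Rightarrow> (nat \<Rightarrow> int) \<Rightarrow> bool" where
  "partial_01_or_single n g \<equiv> partial_01 n g \<or> at_most_one_nz n g"

lemma corr_plane_nonneg:
  assumes "partial_01_or_single a (\<lambda>q. h q j l)" "p < a" "\<forall>q<a. h q j l \<in> {0,1,-1}"
  shows "corr_plane M h p r j l \<in> {0,1}"
  using clamp_corr_nonneg[OF assms(1,2)] assms(2,3) by (auto simp: corr_plane_def Let_def)

lemma lines2_corrected_partial_01:
  assumes "b \<le> M" "sign_hmat a b c h" "lines1 partial_01_or_single a b c h" "lines2 \<Phi> a b c h"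
  shows "lines2 (\<lambda>n g. \<Phi> n g \<or> partial_01 n g) (a * Suc (2*M)) b c (corrected M h)"
  unfolding lines2_def
proof (intro allI impI)
  fix i l assume i: "i < a * Suc (2*M)" and l: "l < c"
  show "\<Phi> b (\<lambda>j. corrected M h i j l) \<or> partial_01 b (\<lambda>j. corrected M h i j l)"
  proof (rule corrected_plane_cases[OF i])
    fix p assume "p < a" "\<And>j l. corrected M h i j l = h p j l"
    then show ?thesis using assms(4) l unfolding lines2_def by simp
  next
    fix p r assume p: "p < a" and eq: "\<And>j l. corrected M h i j l = corr_plane M h p r j l"
    have "partial_01 b (\<lambda>j. corr_plane M h p r j l)"
    proof (rule at_most_one_nz_partial_01[OF corr_plane_at_most_one_nz2[OF assms(1)]])
      show "\<forall>j<b. corr_plane M h p r j l \<in> {0,1}"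
      proof (intro allI impI)
        fix j assume "j < b"
        then show "corr_plane M h p r j l \<in> {0,1}"
          using assms(2,3) l p by (intro corr_plane_nonneg) (auto simp: lines1_def sign_hmat_def)
      qed
    qed
    then show ?thesis using eq by simp
  qed
qed

lemma lines3_corrected_partial_01:
  assumes "c \<le> M" "sign_hmat a b c h" "lines1 partial_01_or_single a b c h" "lines3 \<Phi> a b c h"
  shows "lines3 (\<lambda>n g. \<Phi> n g \<or> partial_01 n g) (a * Suc (2*M)) b c (corrected M h)"
  unfolding lines3_def
proof (intro allI impI)
  fix i j assume i: "i < a * Suc (2*M)" and j: "j < b"
  show "\<Phi> c (\<lambda>l. corrected M h i j l) \<or> partial_01 c (\<lambda>l. corrected M h i j l)"
  proof (rule corrected_plane_cases[OF i])
    fix p assume "p < a" "\<And>j l. corrected M h i j l = h p j l"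
    then show ?thesis using assms(4) j unfolding lines3_def by simp
  next
    fix p r assume p: "p < a" and eq: "\<And>j l. corrected M h i j l = corr_plane M h p r j l"
    have "partial_01 c (\<lambda>l. corr_plane M h p r j l)"
    proof (rule at_most_one_nz_partial_01[OF corr_plane_at_most_one_nz3[OF assms(1)]])
      show "\<forall>l<c. corr_plane M h p r j l \<in> {0,1}"
      proof (intro allI impI)
        fix l assume "l < c"
        then show "corr_plane M h p r j l \<in> {0,1}"
          using assms(2,3) j p by (intro corr_plane_nonneg) (auto simp: lines1_def sign_hmat_def)
      qed
    qed
    then show ?thesis using eq by simp
  qed
qed

lemma correct_axis1:
  assumes "sign_hmat a b c h" "1 \<le> b" "1 \<le> c"
  obtains a' G where "a \<le> a'" "inserts_to (a,b,c,h) (a',b,c,G)" "sign_hmat a' b c G"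
    "lines1 partial_01 a' b c G"
    "\<And>\<Phi>. lines2 \<Phi> a b c h \<Longrightarrow> lines2 (\<lambda>n g. \<Phi> n g \<or> at_most_one_nz n g) a' b c G"
    "\<And>\<Phi>. lines3 \<Phi> a b c h \<Longrightarrow> lines3 (\<lambda>n g. \<Phi> n g \<or> at_most_one_nz n g) a' b c G"
    "\<And>\<Phi>. lines1 partial_01_or_single a b c h \<Longrightarrow> lines2 \<Phi> a b c h \<Longrightarrow>
       lines2 (\<lambda>n g. \<Phi> n g \<or> partial_01 n g) a' b c G"
    "\<And>\<Phi>. lines1 partial_01_or_single a b c h \<Longrightarrow> lines3 \<Phi> a b c h \<Longrightarrow>
       lines3 (\<lambda>n g. \<Phi> n g \<or> partial_01 n g) a' b c G"
proof -
  define M where "M = max b c"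
  have M: "0 < M" "b \<le> M" "c \<le> M" using assms(2,3) unfolding M_def by auto
  show thesis
    using that[of "a * Suc (2*M)" "corrected M h"] inserts_to_corrected[OF M(2,3)]
      sign_hmat_corrected[OF assms(1)] lines1_corrected[OF M(1) assms(1)]
      lines2_corrected[OF M(2)] lines3_corrected[OF M(3)]
      lines2_corrected_partial_01[OF M(2) assms(1)] lines3_corrected_partial_01[OF M(3) assms(1)]
    by simp
qed

lemma correct_axis2:
  assumes "sign_hmat a b c h" "1 \<le> a" "1 \<le> c"
  obtains b' G where "b \<le> b'" "inserts_to (a,b,c,h) (a,b',c,G)" "sign_hmat a b' c G"
    "lines2 partial_01 a b' c G"
    "\<And>\<Phi>. lines1 \<Phi> a b c h \<Longrightarrow> lines1 (\<lambda>n g. \<Phi> n g \<or> at_most_one_nz n g) a b' c G"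
    "\<And>\<Phi>. lines3 \<Phi> a b c h \<Longrightarrow> lines3 (\<lambda>n g. \<Phi> n g \<or> at_most_one_nz n g) a b' c G"
    "\<And>\<Phi>. lines2 partial_01_or_single a b c h \<Longrightarrow> lines1 \<Phi> a b c h \<Longrightarrow>
       lines1 (\<lambda>n g. \<Phi> n g \<or> partial_01 n g) a b' c G"
    "\<And>\<Phi>. lines2 partial_01_or_single a b c h \<Longrightarrow> lines3 \<Phi> a b c h \<Longrightarrow>
       lines3 (\<lambda>n g. \<Phi> n g \<or> partial_01 n g) a b' c G"
proof -
  have sign: "sign_hmat b a c (swap12 h)" using assms(1) by (simp add: sign_hmat_swap12)
  obtain b' G where "b \<le> b'" and R: "inserts_to (b,a,c,swap12 h) (b',a,c,G)"
    and S: "sign_hmat b' a c G" and P: "lines1 partial_01 b' a c G"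
    and L1: "\<And>\<Phi>. lines2 \<Phi> b a c (swap12 h) \<Longrightarrow> lines2 (\<lambda>n g. \<Phi> n g \<or> at_most_one_nz n g) b' a c G"
    and L3: "\<And>\<Phi>. lines3 \<Phi> b a c (swap12 h) \<Longrightarrow> lines3 (\<lambda>n g. \<Phi> n g \<or> at_most_one_nz n g) b' a c G"
    and N1: "\<And>\<Phi>. lines1 partial_01_or_single b a c (swap12 h) \<Longrightarrow> lines2 \<Phi> b a c (swap12 h) \<Longrightarrow>
       lines2 (\<lambda>n g. \<Phi> n g \<or> partial_01 n g) b' a c G"
    and N3: "\<And>\<Phi>. lines1 partial_01_or_single b a c (swap12 h) \<Longrightarrow> lines3 \<Phi> b a c (swap12 h) \<Longrightarrow>
       lines3 (\<lambda>n g. \<Phi> n g \<or> partial_01 n g) b' a c G"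
    by (rule correct_axis1[OF sign assms(2,3)]) (rule that)
  show thesis
  proof (rule that[of b' "swap12 G"])
    show "inserts_to (a,b,c,h) (a,b',c,swap12 G)" by (rule inserts_to_swap12) (simp add: R)
  qed (use \<open>b \<le> b'\<close> S P L1 L3 N1 N3 in
    \<open>simp_all add: sign_hmat_swap12 lines1_swap12 lines2_swap12 lines3_swap12\<close>)
qed

lemma correct_axis3:
  assumes "sign_hmat a b c h" "1 \<le> a" "1 \<le> b"
  obtains c' G where "c \<le> c'" "inserts_to (a,b,c,h) (a,b,c',G)" "sign_hmat a b c' G"
    "lines3 partial_01 a b c' G"
    "\<And>\<Phi>. lines1 \<Phi> a b c h \<Longrightarrow> lines1 (\<lambda>n g. \<Phi> n g \<or> at_most_one_nz n g) a b c' G"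
    "\<And>\<Phi>. lines2 \<Phi> a b c h \<Longrightarrow> lines2 (\<lambda>n g. \<Phi> n g \<or> at_most_one_nz n g) a b c' G"
    "\<And>\<Phi>. lines3 partial_01_or_single a b c h \<Longrightarrow> lines1 \<Phi> a b c h \<Longrightarrow>
       lines1 (\<lambda>n g. \<Phi> n g \<or> partial_01 n g) a b c' G"
    "\<And>\<Phi>. lines3 partial_01_or_single a b c h \<Longrightarrow> lines2 \<Phi> a b c h \<Longrightarrow>
       lines2 (\<lambda>n g. \<Phi> n g \<or> partial_01 n g) a b c' G"
proof -
  have sign: "sign_hmat c b a (swap13 h)" using assms(1) by (simp add: sign_hmat_swap13)
  obtain c' G where "c \<le> c'" and R: "inserts_to (c,b,a,swap13 h) (c',b,a,G)"
    and S: "sign_hmat c' b a G" and P: "lines1 partial_01 c' b a G"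
    and L2: "\<And>\<Phi>. lines2 \<Phi> c b a (swap13 h) \<Longrightarrow> lines2 (\<lambda>n g. \<Phi> n g \<or> at_most_one_nz n g) c' b a G"
    and L1: "\<And>\<Phi>. lines3 \<Phi> c b a (swap13 h) \<Longrightarrow> lines3 (\<lambda>n g. \<Phi> n g \<or> at_most_one_nz n g) c' b a G"
    and N2: "\<And>\<Phi>. lines1 partial_01_or_single c b a (swap13 h) \<Longrightarrow> lines2 \<Phi> c b a (swap13 h) \<Longrightarrow>
       lines2 (\<lambda>n g. \<Phi> n g \<or> partial_01 n g) c' b a G"
    and N1: "\<And>\<Phi>. lines1 partial_01_or_single c b a (swap13 h) \<Longrightarrow> lines3 \<Phi> c b a (swap13 h) \<Longrightarrow>
       lines3 (\<lambda>n g. \<Phi> n g \<or> partial_01 n g) c' b a G"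
    by (rule correct_axis1[OF sign assms(3,2)]) (rule that)
  show thesis
  proof (rule that[of c' "swap13 G"])
    show "inserts_to (a,b,c,h) (a,b,c',swap13 G)" by (rule inserts_to_swap13) (simp add: R)
  qed (use \<open>c \<le> c'\<close> S P L1 L2 N1 N2 in
    \<open>simp_all add: sign_hmat_swap13 lines1_swap13 lines2_swap13 lines3_swap13\<close>)
qed

text \<open>Five correction passes, along the axes 1, 2, 3 and then 1, 2. A pass keeps the old lines
  along the other axes and adds lines with a single nonzero entry, which is nonnegative once the
  lines along the corrected axis are partial-01 or single.\<close>
lemma lines_partial_01_or_single:
  assumes "sign_hmat m n k A" "1 \<le> m" "1 \<le> n" "1 \<le> k"
  obtains a b c G where "m \<le> a" "n \<le> b" "k \<le> c" "inserts_to (m,n,k,A) (a,b,c,G)"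
    "sign_hmat a b c G" "lines1 partial_01_or_single a b c G"
    "lines2 partial_01_or_single a b c G" "lines3 partial_01 a b c G"
proof -
  obtain a1 G1 where s1: "m \<le> a1" "inserts_to (m,n,k,A) (a1,n,k,G1)" "sign_hmat a1 n k G1"
    "lines1 partial_01 a1 n k G1"
    by (rule correct_axis1[OF assms(1,3,4)])
  have a1: "1 \<le> a1" using s1(1) assms(2) by simp
  obtain b2 G2 where s2: "n \<le> b2" "inserts_to (a1,n,k,G1) (a1,b2,k,G2)" "sign_hmat a1 b2 k G2"
    "lines2 partial_01 a1 b2 k G2" "lines1 partial_01_or_single a1 b2 k G2"
    by (rule correct_axis2[OF s1(3) a1 assms(4)]) (use s1(4) in blast)
  have b2: "1 \<le> b2" using s2(1) assms(3) by simp
  show thesis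
  proof (rule correct_axis3[OF s2(3) a1 b2])
    fix c3 G3
    assume "k \<le> c3" and R: "inserts_to (a1,b2,k,G2) (a1,b2,c3,G3)" and "sign_hmat a1 b2 c3 G3"
      "lines3 partial_01 a1 b2 c3 G3"
      and L1: "\<And>\<Phi>. lines1 \<Phi> a1 b2 k G2 \<Longrightarrow> lines1 (\<lambda>n g. \<Phi> n g \<or> at_most_one_nz n g) a1 b2 c3 G3"
      and L2: "\<And>\<Phi>. lines2 \<Phi> a1 b2 k G2 \<Longrightarrow> lines2 (\<lambda>n g. \<Phi> n g \<or> at_most_one_nz n g) a1 b2 c3 G3"
    moreover have "lines1 partial_01_or_single a1 b2 c3 G3"
      using L1[OF s2(5)] by (rule lines1_mono) blast
    moreover have "inserts_to (m,n,k,A) (a1,b2,c3,G3)"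
      using s1(2) s2(2) R by (meson inserts_to_trans)
    ultimately show thesis using that s1(1) s2(1) L2[OF s2(4)] by blast
  qed
qed

lemma lines_partial_01_of_partial_01_or_single:
  assumes "sign_hmat a b c G" "1 \<le> a" "1 \<le> b" "1 \<le> c"
    and "lines1 partial_01_or_single a b c G" "lines2 partial_01_or_single a b c G"
    and "lines3 partial_01 a b c G"
  obtains a' b' G' where "a \<le> a'" "b \<le> b'" "inserts_to (a,b,c,G) (a',b',c,G')"
    "sign_hmat a' b' c G'" "lines1 partial_01 a' b' c G'" "lines2 partial_01 a' b' c G'"
    "lines3 partial_01 a' b' c G'"
proof -
  obtain a4 G4 where s4: "a \<le> a4" "inserts_to (a,b,c,G) (a4,b,c,G4)" "sign_hmat a4 b c G4"
    "lines1 partial_01 a4 b c G4" "lines2 partial_01_or_single a4 b c G4"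
    "lines3 partial_01 a4 b c G4"
  proof (rule correct_axis1[OF assms(1,3,4)])
    fix a4 G4
    assume "a \<le> a4" "inserts_to (a,b,c,G) (a4,b,c,G4)" "sign_hmat a4 b c G4"
      "lines1 partial_01 a4 b c G4"
      and L2: "\<And>\<Phi>. lines1 partial_01_or_single a b c G \<Longrightarrow> lines2 \<Phi> a b c G \<Longrightarrow>
        lines2 (\<lambda>n g. \<Phi> n g \<or> partial_01 n g) a4 b c G4"
      and L3: "\<And>\<Phi>. lines1 partial_01_or_single a b c G \<Longrightarrow> lines3 \<Phi> a b c G \<Longrightarrow>
        lines3 (\<lambda>n g. \<Phi> n g \<or> partial_01 n g) a4 b c G4"
    moreover have "lines2 partial_01_or_single a4 b c G4"
      using L2[OF assms(5,6)] by (rule lines2_mono) blast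
    moreover have "lines3 partial_01 a4 b c G4"
      using L3[OF assms(5,7)] by (rule lines3_mono) blast
    ultimately show thesis using that by blast
  qed
  have a4: "1 \<le> a4" using s4(1) assms(2) by simp
  show thesis
  proof (rule correct_axis2[OF s4(3) a4 assms(4)])
    fix b5 G5
    assume "b \<le> b5" and R: "inserts_to (a4,b,c,G4) (a4,b5,c,G5)" and "sign_hmat a4 b5 c G5"
      "lines2 partial_01 a4 b5 c G5"
      and L1: "\<And>\<Phi>. lines2 partial_01_or_single a4 b c G4 \<Longrightarrow> lines1 \<Phi> a4 b c G4 \<Longrightarrow>
        lines1 (\<lambda>n g. \<Phi> n g \<or> partial_01 n g) a4 b5 c G5"
      and L3: "\<And>\<Phi>. lines2 partial_01_or_single a4 b c G4 \<Longrightarrow> lines3 \<Phi> a4 b c G4 \<Longrightarrow>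
        lines3 (\<lambda>n g. \<Phi> n g \<or> partial_01 n g) a4 b5 c G5"
    moreover have "lines1 partial_01 a4 b5 c G5"
      using L1[OF s4(5,4)] by (rule lines1_mono) blast
    moreover have "lines3 partial_01 a4 b5 c G5"
      using L3[OF s4(5,6)] by (rule lines3_mono) blast
    moreover have "inserts_to (a,b,c,G) (a4,b5,c,G5)" using s4(2) R by (rule inserts_to_trans)
    ultimately show thesis using that s4(1) by blast
  qed
qed

lemma all_lines_partial_01:
  assumes "sign_hmat m n k A" "1 \<le> m" "1 \<le> n" "1 \<le> k"
  obtains a b c G where "m \<le> a" "n \<le> b" "k \<le> c" "inserts_to (m,n,k,A) (a,b,c,G)"
    "sign_hmat a b c G" "lines1 partial_01 a b c G" "lines2 partial_01 a b c G"
    "lines3 partial_01 a b c G"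
proof -
  obtain a b c G where G: "m \<le> a" "n \<le> b" "k \<le> c" "inserts_to (m,n,k,A) (a,b,c,G)"
    "sign_hmat a b c G" "lines1 partial_01_or_single a b c G"
    "lines2 partial_01_or_single a b c G" "lines3 partial_01 a b c G"
    by (rule lines_partial_01_or_single[OF assms])
  have "1 \<le> a" "1 \<le> b" "1 \<le> c" using G(1-3) assms(2-4) by simp_all
  then obtain a' b' G' where G': "a \<le> a'" "b \<le> b'" "inserts_to (a,b,c,G) (a',b',c,G')"
    "sign_hmat a' b' c G'" "lines1 partial_01 a' b' c G'" "lines2 partial_01 a' b' c G'"
    "lines3 partial_01 a' b' c G'"
    by (rule lines_partial_01_of_partial_01_or_single[OF G(5) _ _ _ G(6-8)])
  show thesis
  proof (rule that)
    show "inserts_to (m,n,k,A) (a',b',c,G')" using G(4) G'(3) by (rule inserts_to_trans)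
  qed (use G(1-3) G' in auto)
qed

lemma zero_signed_subperm: "signed_subperm m n (\<lambda>i j. 0)"
  by (simp add: signed_subperm_def subperm_def)

lemma inserts_to_zero_pad:
  assumes "a \<le> a'" "b \<le> b'" "c \<le> c'"
  shows "inserts_to (a,b,c,h) (a',b',c', \<lambda>i j l. if i < a \<and> j < b \<and> l < c then h i j l else 0)"
proof -
  define h1 where "h1 = (\<lambda>i j l. if i < a then h i j l else 0)"
  define h2 where "h2 = (\<lambda>i j l. if j < b then h1 i j l else 0)"
  define h3 where "h3 = (\<lambda>i j l. if l < c then h2 i j l else 0)"
  have "inserts_to (a,b,c,h) (a', b, c, h1)"
    using inserts_to_append1[of "a' - a" b c "\<lambda>_ _ _. 0" a h] zero_signed_subperm assms(1)
    unfolding h1_def by simp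
  also have "inserts_to (a',b,c,h1) (a', b', c, h2)"
    using inserts_to_append2[of "b' - b" a' c "\<lambda>_ _ _. 0" b h1] zero_signed_subperm assms(2)
    unfolding h2_def by simp
  also have "inserts_to (a',b',c,h2) (a', b', c', h3)"
    using inserts_to_append3[of "c' - c" a' b' "\<lambda>_ _ _. 0" c h2] zero_signed_subperm assms(3)
    unfolding h3_def by simp
  also have "h3 = (\<lambda>i j l. if i < a \<and> j < b \<and> l < c then h i j l else 0)"
    unfolding h1_def h2_def h3_def by (simp add: fun_eq_iff)
  finally show ?thesis .
qed

lemma lines_zero_pad:
  assumes "lines1 partial_01 a b c h" "lines2 partial_01 a b c h" "lines3 partial_01 a b c h"
    and "a \<le> N" "b \<le> N" "c \<le> N"
  defines "G \<equiv> \<lambda>i j l. if i < a \<and> j < b \<and> l < c then h i j l else 0"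
  shows "lines1 partial_01 N N N G \<and> lines2 partial_01 N N N G \<and> lines3 partial_01 N N N G"
proof -
  have pad: "partial_01 N (\<lambda>x. if x < n \<and> Q then g x else 0)"
    if "Q \<Longrightarrow> partial_01 n g" "n \<le> N" for n Q and g :: "nat \<Rightarrow> int"
  proof (cases Q)
    case True
    then show ?thesis using partial_01_pad[OF that(1), of "N - n"] that(2) by simp
  qed (simp add: partial_01_zero)
  have "lines1 partial_01 N N N G"
    unfolding lines1_def G_def
  proof (intro allI impI)
    fix j l
    show "partial_01 N (\<lambda>i. if i < a \<and> j < b \<and> l < c then h i j l else 0)"
      using assms(1,4) by (intro pad) (auto simp: lines1_def)
  qed
  moreover have "lines2 partial_01 N N N G"
    unfolding lines2_def G_def
  proof (intro allI impI)
    fix i l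
    have "partial_01 N (\<lambda>j. if j < b \<and> i < a \<and> l < c then h i j l else 0)"
      using assms(2,5) by (intro pad) (auto simp: lines2_def)
    then show "partial_01 N (\<lambda>j. if i < a \<and> j < b \<and> l < c then h i j l else 0)"
      by (simp add: conj_left_commute)
  qed
  moreover have "lines3 partial_01 N N N G"
    unfolding lines3_def G_def
  proof (intro allI impI)
    fix i j
    have "partial_01 N (\<lambda>l. if l < c \<and> i < a \<and> j < b then h i j l else 0)"
      using assms(3,6) by (intro pad) (auto simp: lines3_def)
    then show "partial_01 N (\<lambda>l. if i < a \<and> j < b \<and> l < c then h i j l else 0)"
      by (simp add: conj_commute conj_left_commute)
  qed
  ultimately show ?thesis by blast
qed

section \<open>Hall's theorem and regular bipartite relations\<close>

definition hall_condition :: "'a set \<Rightarrow> ('a \<Rightarrow> 'b set) \<Rightarrow> bool" where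
  "hall_condition A N \<longleftrightarrow> (\<forall>S\<subseteq>A. card S \<le> card (\<Union>(N ` S)))"

definition has_sdr :: "'a set \<Rightarrow> ('a \<Rightarrow> 'b set) \<Rightarrow> bool" where
  "has_sdr A N \<longleftrightarrow> (\<exists>f. (\<forall>a\<in>A. f a \<in> N a) \<and> inj_on f A)"

lemma has_sdr_split:
  assumes "S \<subseteq> A" "has_sdr S N" "has_sdr (A - S) (\<lambda>a. N a - \<Union>(N ` S))"
  shows "has_sdr A N"
proof -
  obtain f1 where f1: "\<forall>a\<in>S. f1 a \<in> N a" "inj_on f1 S" using assms(2) unfolding has_sdr_def by blast
  obtain f2 where f2: "\<forall>a\<in>A - S. f2 a \<in> N a - \<Union>(N ` S)" "inj_on f2 (A - S)"
    using assms(3) unfolding has_sdr_def by blast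
  define f where "f = (\<lambda>a. if a \<in> S then f1 a else f2 a)"
  have "inj_on f S" "inj_on f (A - S)" using f1(2) f2(2) unfolding f_def by (auto simp: inj_on_def)
  moreover have "f ` S \<inter> f ` (A - S) = {}" using f1(1) f2(1) unfolding f_def by fastforce
  ultimately have "inj_on f (S \<union> (A - S))" by (subst inj_on_Un) auto
  moreover have "S \<union> (A - S) = A" using assms(1) by auto
  moreover have "\<forall>a\<in>A. f a \<in> N a" using f1(1) f2(1) unfolding f_def by auto
  ultimately show ?thesis unfolding has_sdr_def by auto
qed

lemma has_sdr_insert:
  assumes "a \<in> A" "b \<in> N a" "has_sdr (A - {a}) (\<lambda>x. N x - {b})"
  shows "has_sdr A N"
proof -
  obtain f where f: "\<forall>x\<in>A - {a}. f x \<in> N x - {b}" "inj_on f (A - {a})"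
    using assms(3) unfolding has_sdr_def by blast
  have "inj_on (f(a := b)) (insert a (A - {a}))"
    using f by (auto simp: inj_on_def)
  moreover have "\<forall>x\<in>A. (f(a := b)) x \<in> N x" using f(1) assms(2) by auto
  ultimately show ?thesis unfolding has_sdr_def using assms(1) by (metis insert_Diff)
qed

lemma hall_condition_tight:
  assumes "finite A" "\<forall>a\<in>A. finite (N a)" "hall_condition A N"
    and "S \<subseteq> A" "card (\<Union>(N ` S)) = card S"
  shows "hall_condition (A - S) (\<lambda>a. N a - \<Union>(N ` S))"
  unfolding hall_condition_def
proof (intro allI impI)
  fix T assume T: "T \<subseteq> A - S"
  have "T \<union> S \<subseteq> A" using T assms(4) by auto
  then have "finite T" "finite S" using assms(1) finite_subset by auto
  then have fin: "finite T" "finite S" "finite (\<Union>(N ` (T \<union> S)))"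
    using assms(2) \<open>T \<union> S \<subseteq> A\<close> by auto
  have "card T + card S = card (T \<union> S)" using T fin by (subst card_Un_disjoint) auto
  also have "\<dots> \<le> card (\<Union>(N ` (T \<union> S)))"
    using assms(3) \<open>T \<union> S \<subseteq> A\<close> unfolding hall_condition_def by blast
  also have "\<dots> = card (\<Union>a\<in>T. N a - \<Union>(N ` S)) + card (\<Union>(N ` S))"
  proof -
    have "\<Union>(N ` (T \<union> S)) = (\<Union>a\<in>T. N a - \<Union>(N ` S)) \<union> \<Union>(N ` S)" by auto
    then show ?thesis using fin by (subst card_Un_disjoint[symmetric]) auto
  qed
  finally show "card T \<le> card (\<Union>a\<in>T. N a - \<Union>(N ` S))" using assms(5) by simp
qed

lemma hall_condition_remove:
  assumes "finite A" "\<forall>a\<in>A. finite (N a)" "hall_condition A N"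
    and no_tight: "\<forall>S. S \<subseteq> A \<and> S \<noteq> {} \<and> S \<noteq> A \<longrightarrow> card (\<Union>(N ` S)) \<noteq> card S"
    and "a \<in> A"
  shows "hall_condition (A - {a}) (\<lambda>x. N x - {b})"
  unfolding hall_condition_def
proof (intro allI impI)
  fix T assume T: "T \<subseteq> A - {a}"
  show "card T \<le> card (\<Union>x\<in>T. N x - {b})"
  proof (cases "T = {}")
    case False
    have "finite T" using T assms(1) finite_subset by blast
    then have "finite (\<Union>(N ` T))" using T assms(2) by auto
    moreover have "card T < card (\<Union>(N ` T))"
    proof -
      have "T \<subseteq> A" "T \<noteq> A" using T assms(5) by auto
      then have "card (\<Union>(N ` T)) \<noteq> card T" using no_tight False by blast
      moreover have "card T \<le> card (\<Union>(N ` T))"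
        using assms(3) \<open>T \<subseteq> A\<close> unfolding hall_condition_def by blast
      ultimately show ?thesis by simp
    qed
    moreover have "(\<Union>x\<in>T. N x - {b}) = \<Union>(N ` T) - {b}" by auto
    ultimately show ?thesis by (auto simp: card_Diff_singleton_if)
  qed simp
qed

text \<open>Hall's marriage theorem, by induction on \<open>card A\<close>: either some proper subset is tight,
  and the problem splits, or removing one element together with one of its neighbours keeps
  Hall's condition.\<close>
theorem hall:
  assumes "finite A" "\<forall>a\<in>A. finite (N a)" "hall_condition A N"
  shows "has_sdr A N"
  using assms
proof (induction "card A" arbitrary: A N rule: less_induct)
  case less
  show ?case
  proof (cases "\<exists>S. S \<subseteq> A \<and> S \<noteq> {} \<and> S \<noteq> A \<and> card (\<Union>(N ` S)) = card S")
    case True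
    then obtain S where S: "S \<subseteq> A" "S \<noteq> {}" "S \<noteq> A" "card (\<Union>(N ` S)) = card S" by blast
    have fin: "finite S" "finite (A - S)" using S(1) less.prems(1) finite_subset by auto
    have "card S < card A" "card (A - S) < card A"
      using S less.prems(1) fin by (auto intro: psubset_card_mono card_Diff_subset simp: card_gt_0_iff)
    moreover have "hall_condition S N" using less.prems(3) S(1) unfolding hall_condition_def by auto
    ultimately have "has_sdr S N" "has_sdr (A - S) (\<lambda>a. N a - \<Union>(N ` S))"
      using less.hyps fin less.prems S hall_condition_tight[OF less.prems S(1,4)] by auto
    then show ?thesis using has_sdr_split[OF S(1)] by blast
  next
    case no_tight: False
    show ?thesis
    proof (cases "A = {}")
      case False
      then obtain a where a: "a \<in> A" by blast
      then have "card {a} \<le> card (N a)" using less.prems(3) unfolding hall_condition_def by force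
      then obtain b where b: "b \<in> N a" by fastforce
      have "card (A - {a}) < card A" using less.prems(1) a by (rule card_Diff1_less)
      moreover have "hall_condition (A - {a}) (\<lambda>x. N x - {b})"
        using no_tight by (intro hall_condition_remove[OF less.prems _ a]) blast
      ultimately have "has_sdr (A - {a}) (\<lambda>x. N x - {b})"
        using less.hyps[of "A - {a}" "\<lambda>x. N x - {b}"] less.prems(1,2) by auto
      then show ?thesis by (rule has_sdr_insert[where N=N, OF a b])
    qed (simp add: has_sdr_def)
  qed
qed

definition regular_rel :: "nat \<Rightarrow> nat \<Rightarrow> (nat \<Rightarrow> nat \<Rightarrow> bool) \<Rightarrow> bool" where
  "regular_rel n k E \<longleftrightarrow>
     (\<forall>r<n. card {c. c < n \<and> E r c} = k) \<and> (\<forall>c<n. card {r. r < n \<and> E r c} = k)"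

text \<open>\<open>E\<close> is the disjoint union of the graphs of the permutations \<open>\<sigma> 0, \<dots>, \<sigma> (k - 1)\<close>
  of \<open>{..<n}\<close>.\<close>
definition perm_decomp :: "nat \<Rightarrow> nat \<Rightarrow> (nat \<Rightarrow> nat \<Rightarrow> bool) \<Rightarrow> (nat \<Rightarrow> nat \<Rightarrow> nat) \<Rightarrow> bool" where
  "perm_decomp n k E \<sigma> \<longleftrightarrow>
     (\<forall>t<k. \<forall>r<n. \<sigma> t r < n \<and> E r (\<sigma> t r)) \<and> (\<forall>t<k. inj_on (\<sigma> t) {..<n}) \<and>
     (\<forall>r<n. \<forall>c<n. E r c \<longrightarrow> (\<exists>!t. t < k \<and> \<sigma> t r = c))"

lemma regular_rel_hall_condition:
  assumes "0 < k" "regular_rel n k E"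
  shows "hall_condition {..<n} (\<lambda>r. {c. c < n \<and> E r c})"
  unfolding hall_condition_def
proof (intro allI impI)
  fix S assume S: "S \<subseteq> {..<n}"
  define U where "U = (\<Union>r\<in>S. {c. c < n \<and> E r c})"
  have "U \<subseteq> {..<n}" unfolding U_def by auto
  then have fin: "finite S" "finite U" using S finite_subset by auto
  have count: "card {x\<in>X. P x} = (\<Sum>x\<in>X. if P x then 1 else 0)" if "finite X" for X and P :: "nat \<Rightarrow> bool"
    using that by (simp add: sum.inter_filter[symmetric])
  have "k * card S = (\<Sum>r\<in>S. card {c\<in>U. E r c})"
  proof -
    have "{c\<in>U. E r c} = {c. c < n \<and> E r c}" if "r \<in> S" for r using that unfolding U_def by auto
    moreover have "card {c. c < n \<and> E r c} = k" if "r \<in> S" for r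
      using that assms(2) S unfolding regular_rel_def by auto
    ultimately show ?thesis by simp
  qed
  also have "\<dots> = (\<Sum>c\<in>U. card {r\<in>S. E r c})"
    using fin by (simp add: count sum.swap[of _ S])
  also have "\<dots> \<le> (\<Sum>c\<in>U. k)"
  proof (rule sum_mono)
    fix c assume "c \<in> U"
    then have "c < n" unfolding U_def by auto
    have "card {r\<in>S. E r c} \<le> card {r. r < n \<and> E r c}" using S by (intro card_mono) auto
    then show "card {r\<in>S. E r c} \<le> k" using assms(2) \<open>c < n\<close> unfolding regular_rel_def by simp
  qed
  also have "\<dots> = k * card U" by simp
  finally show "card S \<le> card U" using assms(1) by simp
qed

lemma regular_rel_perfect_matching:
  assumes "0 < k" "regular_rel n k E"
  obtains \<tau> where "\<forall>r<n. \<tau> r < n \<and> E r (\<tau> r)" "inj_on \<tau> {..<n}"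
proof -
  have "has_sdr {..<n} (\<lambda>r. {c. c < n \<and> E r c})"
    by (rule hall) (auto simp: regular_rel_hall_condition[OF assms])
  then show thesis using that unfolding has_sdr_def by auto
qed

lemma regular_rel_remove_matching:
  assumes "regular_rel n (Suc k) E" "\<forall>r<n. \<tau> r < n \<and> E r (\<tau> r)" "inj_on \<tau> {..<n}"
  shows "regular_rel n k (\<lambda>r c. E r c \<and> \<tau> r \<noteq> c)"
  unfolding regular_rel_def
proof (intro conjI allI impI)
  fix r assume r: "r < n"
  have "{c. c < n \<and> E r c \<and> \<tau> r \<noteq> c} = {c. c < n \<and> E r c} - {\<tau> r}" by auto
  then show "card {c. c < n \<and> E r c \<and> \<tau> r \<noteq> c} = k"
    using assms(1,2) r unfolding regular_rel_def by simp
next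
  fix c assume c: "c < n"
  have "\<tau> ` {..<n} = {..<n}" using assms(2,3) by (intro endo_inj_surj) auto
  then obtain r0 where r0: "r0 < n" "\<tau> r0 = c" using c by (metis imageE lessThan_iff)
  have "{r. r < n \<and> E r c \<and> \<tau> r \<noteq> c} = {r. r < n \<and> E r c} - {r0}"
    using r0 assms(3) by (auto dest: inj_onD)
  moreover have "r0 \<in> {r. r < n \<and> E r c}" using r0 assms(2) by auto
  ultimately show "card {r. r < n \<and> E r c \<and> \<tau> r \<noteq> c} = k"
    using assms(1,2) c r0 unfolding regular_rel_def by simp
qed

lemma perm_decomp_Suc:
  assumes "perm_decomp n k (\<lambda>r c. E r c \<and> \<tau> r \<noteq> c) \<sigma>"
    and "\<forall>r<n. \<tau> r < n \<and> E r (\<tau> r)" "inj_on \<tau> {..<n}"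
  shows "perm_decomp n (Suc k) E (\<sigma>(k := \<tau>))"
  unfolding perm_decomp_def
proof (intro conjI allI impI)
  fix r c assume rc: "r < n" "c < n" "E r c"
  show "\<exists>!t. t < Suc k \<and> (\<sigma>(k := \<tau>)) t r = c"
  proof (cases "\<tau> r = c")
    case True
    show ?thesis
    proof (rule ex1I[of _ k])
      fix t assume t: "t < Suc k \<and> (\<sigma>(k := \<tau>)) t r = c"
      show "t = k"
      proof (rule ccontr)
        assume "t \<noteq> k"
        then have "t < k" "\<sigma> t r = c" using t by auto
        then show False using assms(1) rc(1) True unfolding perm_decomp_def by auto
      qed
    qed (use True in simp)
  next
    case False
    then have ex1: "\<exists>!t. t < k \<and> \<sigma> t r = c" using assms(1) rc unfolding perm_decomp_def by simp
    then obtain t where t: "t < k" "\<sigma> t r = c" by auto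
    have u: "t' = t" if "t' < k" "\<sigma> t' r = c" for t' using ex1 t that by auto
    show ?thesis
    proof (rule ex1I[of _ t])
      fix t' assume "t' < Suc k \<and> (\<sigma>(k := \<tau>)) t' r = c"
      then show "t' = t" using u False by (cases "t' = k") auto
    qed (use t in simp)
  qed
qed (use assms in \<open>auto simp: perm_decomp_def less_Suc_eq\<close>)

theorem regular_rel_perm_decomp:
  assumes "regular_rel n k E"
  obtains \<sigma> where "perm_decomp n k E \<sigma>"
  using assms
proof (induction k arbitrary: E thesis)
  case 0
  have "\<not> E r c" if "r < n" "c < n" for r c
    using 0(2) that unfolding regular_rel_def by (auto simp: card_eq_0_iff)
  then show ?case using 0(1) unfolding perm_decomp_def by blast
next
  case (Suc k)
  obtain \<tau> where \<tau>: "\<forall>r<n. \<tau> r < n \<and> E r (\<tau> r)" "inj_on \<tau> {..<n}"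
    using regular_rel_perfect_matching[OF _ Suc.prems(2)] by blast
  obtain \<sigma> where "perm_decomp n k (\<lambda>r c. E r c \<and> \<tau> r \<noteq> c) \<sigma>"
    using Suc.IH regular_rel_remove_matching[OF Suc.prems(2) \<tau>] by blast
  then show ?case using Suc.prems(1) perm_decomp_Suc[where E=E, OF _ \<tau>] by blast
qed

section \<open>Completion to twice the size\<close>

lemma card_lessThan_split:
  fixes N :: nat
  shows "card {i. i < 2*N \<and> P i} = card {i. i < N \<and> P i} + card {k. k < N \<and> P (N + k)}"
proof -
  have "{i. i < 2*N \<and> P i} = {i. i < N \<and> P i} \<union> (\<lambda>k. N + k) ` {k. k < N \<and> P (N + k)}"
  proof (intro set_eqI iffI)
    fix i assume "i \<in> {i. i < 2*N \<and> P i}"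
    then show "i \<in> {i. i < N \<and> P i} \<union> (\<lambda>k. N + k) ` {k. k < N \<and> P (N + k)}"
      by (cases "i < N") (auto simp: image_iff intro!: exI[of _ "i - N"])
  qed auto
  moreover have "card ((\<lambda>k. N + k) ` {k. k < N \<and> P (N + k)}) = card {k. k < N \<and> P (N + k)}"
    by (rule card_image) (auto simp: inj_on_def)
  moreover have "{i. i < N \<and> P i} \<inter> (\<lambda>k. N + k) ` {k. k < N \<and> P (N + k)} = {}" by auto
  ultimately show ?thesis by (simp add: card_Un_disjoint)
qed

lemma card_lessThan_01:
  assumes "\<forall>x<N. f x \<in> {0,1::int}"
  shows "card {x. x < N \<and> f x = 0} + card {x. x < N \<and> f x = 1} = N"
proof -
  have "{x. x < N \<and> f x = 0} \<union> {x. x < N \<and> f x = 1} = {..<N}" using assms by auto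
  moreover have "{x. x < N \<and> f x = 0} \<inter> {x. x < N \<and> f x = 1} = {}" by auto
  ultimately show ?thesis using card_Un_disjoint[of "{x. x < N \<and> f x = 0}" "{x. x < N \<and> f x = 1}"]
    by simp
qed

lemma card_lessThan_not: "card {x. x < (N::nat) \<and> \<not> P x} = N - card {x. x < N \<and> P x}"
proof -
  have "{x. x < N \<and> \<not> P x} = {..<N} - {x. x < N \<and> P x}" by auto
  moreover have "{x. x < N \<and> P x} \<subseteq> {..<N}" by auto
  ultimately show ?thesis by (simp add: card_Diff_subset)
qed

lemma card_lessThan_le: "card {x. x < (M::nat) \<and> P x} \<le> M"
  using card_mono[of "{..<M}" "{x. x < M \<and> P x}"] by auto

lemma card_bij_filter:
  assumes "bij_betw f A A"
  shows "card {x\<in>A. P (f x)} = card {y\<in>A. P y}"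
proof -
  have "f ` {x\<in>A. P (f x)} = {y\<in>A. P y}"
    using assms unfolding bij_betw_def by (auto simp: image_iff)
  moreover have "inj_on f {x\<in>A. P (f x)}"
    using assms unfolding bij_betw_def by (auto intro: inj_on_subset)
  ultimately show ?thesis using card_image by fastforce
qed

lemma card_involution:
  assumes "\<forall>x\<in>A. f x \<in> A \<and> f (f x) = x"
  shows "card {x\<in>A. Q x (f x)} = card {y\<in>A. Q (f y) y}"
proof -
  have "f ` {x\<in>A. Q x (f x)} = {y\<in>A. Q (f y) y}"
    using assms by (auto simp: image_iff) (metis)
  moreover have "inj_on f {x\<in>A. Q x (f x)}"
    using assms by (auto simp: inj_on_def) (metis)
  ultimately show ?thesis using card_image by fastforce
qed

lemma add_mod_eq_iff:
  fixes N k j l :: nat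
  assumes "k < N" "j < N" "l < N"
  shows "(j + l) mod N = k \<longleftrightarrow> j = (k + N - l) mod N"
proof
  have "((k + N - l) mod N + l) mod N = (k + N - l + l) mod N" by (simp add: mod_add_left_eq)
  also have "k + N - l + l = k + N" using assms by simp
  finally have inv: "((k + N - l) mod N + l) mod N = k" using assms(1) by simp
  show "j = (k + N - l) mod N" if "(j + l) mod N = k"
    using add_mod_inj[of j N "(k + N - l) mod N" l] that inv assms by simp
  show "(j + l) mod N = k" if "j = (k + N - l) mod N"
    using that inv by simp
qed

lemma card_rotate:
  fixes l N :: nat
  assumes "l < N"
  shows "card {k. k < N \<and> P ((k + N - l) mod N)} = card {j. j < N \<and> P j}"
proof -
  have "inj_on (\<lambda>k. (k + N - l) mod N) {..<N}"
  proof (rule inj_onI)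
    fix x y assume "x \<in> {..<N}" "y \<in> {..<N}" "(x + N - l) mod N = (y + N - l) mod N"
    then show "x = y" using add_mod_inj[of x N y "N - l"] assms by simp
  qed
  moreover from this have "(\<lambda>k. (k + N - l) mod N) ` {..<N} = {..<N}"
    using assms by (intro endo_inj_surj) auto
  ultimately have "bij_betw (\<lambda>k. (k + N - l) mod N) {..<N} {..<N}" by (simp add: bij_betw_def)
  from card_bij_filter[OF this, of P] show ?thesis by (simp add: Collect_conj_eq lessThan_def)
qed

lemma card_reflect:
  fixes k N :: nat
  assumes "k < N"
  shows "card {j. j < N \<and> Q j ((k + N - j) mod N)} = card {l. l < N \<and> Q ((k + N - l) mod N) l}"
proof -
  have "(k + N - (k + N - j) mod N) mod N = j" if "j < N" for j
    using add_mod_eq_iff[OF assms that, of "(k + N - j) mod N"]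
      add_mod_eq_iff[OF assms _ that, of "(k + N - j) mod N"] assms that by (simp add: add.commute)
  then have "card {x\<in>{..<N}. Q x ((k + N - x) mod N)} = card {y\<in>{..<N}. Q ((k + N - y) mod N) y}"
    using assms by (intro card_involution) auto
  then show ?thesis by (simp add: Collect_conj_eq lessThan_def)
qed

lemma plane_count_ones:
  fixes u :: "nat \<Rightarrow> nat \<Rightarrow> int"
  assumes "\<forall>x<N. psum (u x) N \<in> {0,1}" "\<forall>y<N. psum (\<lambda>x. u x y) N \<in> {0,1}"
  shows "card {x. x < N \<and> psum (u x) N = 1} = card {y. y < N \<and> psum (\<lambda>x. u x y) N = 1}"
proof -
  have count: "int (card {x. x < N \<and> f x = 1}) = (\<Sum>x<N. f x)" if "\<forall>x<N. f x \<in> {0,1}" for f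
  proof -
    have "(\<Sum>x<N. f x) = (\<Sum>x<N. if f x = 1 then 1 else 0)" using that by (intro sum.cong) auto
    then show ?thesis by (simp add: sum.If_cases Collect_conj_eq lessThan_def Int_commute)
  qed
  have "int (card {x. x < N \<and> psum (u x) N = 1}) = (\<Sum>x<N. \<Sum>y<N. u x y)"
    using count[of "\<lambda>x. psum (u x) N"] assms(1) by (simp add: psum_def)
  also have "\<dots> = (\<Sum>y<N. \<Sum>x<N. u x y)" by (rule sum.swap)
  also have "\<dots> = int (card {y. y < N \<and> psum (\<lambda>x. u x y) N = 1})"
    using count[of "\<lambda>y. psum (\<lambda>x. u x y) N"] assms(2) by (simp add: psum_def)
  finally show ?thesis by linarith
qed

text \<open>New row-vertical plane \<open>N + k\<close> supplies the missing final \<open>+1\<close> of every axis-1 line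
  \<open>(j, l)\<close> with sum \<open>0\<close> on the broken diagonal \<open>(j + l) mod N = k\<close>.\<close>
definition fill1 :: "nat \<Rightarrow> hmat \<Rightarrow> nat \<Rightarrow> nat \<Rightarrow> nat \<Rightarrow> int" where
  "fill1 N h k j l = (if psum (\<lambda>i. h i j l) N = 0 \<and> (j + l) mod N = k then 1 else 0)"

lemma psum_fill1_axis2:
  assumes "k < N" "l < N"
  shows "psum (\<lambda>j. fill1 N h k j l) N = (if psum (\<lambda>i. h i ((k + N - l) mod N) l) N = 0 then 1 else 0)"
proof -
  define j0 where "j0 = (k + N - l) mod N"
  have j0: "j0 < N" unfolding j0_def using assms by simp
  have "psum (\<lambda>j. fill1 N h k j l) N = fill1 N h k j0 l"
    using add_mod_eq_iff[OF assms(1) _ assms(2)] j0 unfolding fill1_def j0_def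
    by (intro psum_single) auto
  then show ?thesis using add_mod_eq_iff[OF assms(1) j0 assms(2)] unfolding fill1_def j0_def by simp
qed

lemma psum_fill1_axis3:
  assumes "k < N" "j < N"
  shows "psum (\<lambda>l. fill1 N h k j l) N = (if psum (\<lambda>i. h i j ((k + N - j) mod N)) N = 0 then 1 else 0)"
proof -
  define l0 where "l0 = (k + N - j) mod N"
  have l0: "l0 < N" unfolding l0_def using assms by simp
  have eq: "(j + l) mod N = k \<longleftrightarrow> l = l0" if "l < N" for l
    using add_mod_eq_iff[OF assms(1) that assms(2)] unfolding l0_def by (simp add: add.commute)
  have "psum (\<lambda>l. fill1 N h k j l) N = fill1 N h k j l0"
    using eq l0 unfolding fill1_def by (intro psum_single) auto
  then show ?thesis using eq[OF l0] unfolding fill1_def l0_def by simp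
qed

lemma psum_fill1_planes:
  assumes "0 < N"
  shows "psum (\<lambda>k. fill1 N h k j l) N = (if psum (\<lambda>i. h i j l) N = 0 then 1 else 0)"
proof -
  have "psum (\<lambda>k. fill1 N h k j l) N = fill1 N h ((j + l) mod N) j l"
    using assms unfolding fill1_def by (intro psum_single) auto
  then show ?thesis unfolding fill1_def by simp
qed

lemma fill1_01: "fill1 N h k j l \<in> {0,1}"
  by (simp add: fill1_def)

lemma fill1_at_most_one_nz2: "at_most_one_nz N (\<lambda>j. fill1 N h k j l)"
  unfolding at_most_one_nz_def
proof (intro allI impI)
  fix j j' assume "j < N" "j' < N" "fill1 N h k j l \<noteq> 0" "fill1 N h k j' l \<noteq> 0"
  then show "j = j'" using add_mod_inj[of j N j' l] by (auto simp: fill1_def split: if_splits)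
qed

lemma fill1_at_most_one_nz3: "at_most_one_nz N (\<lambda>l. fill1 N h k j l)"
  unfolding at_most_one_nz_def
proof (intro allI impI)
  fix l l' assume "l < N" "l' < N" "fill1 N h k j l \<noteq> 0" "fill1 N h k j l' \<noteq> 0"
  then show "l = l'" using add_mod_inj'[of l N l' j] by (auto simp: fill1_def split: if_splits)
qed

lemma fill1_signed_subperm: "signed_subperm N N (fill1 N h k)"
proof -
  have "subperm N N (fill1 N h k)"
    unfolding subperm_def
  proof (intro conjI allI impI)
    fix i j j' assume "i < N" "j < N" "j' < N" "fill1 N h k i j = 1 \<and> fill1 N h k i j' = 1"
    then show "j = j'" using fill1_at_most_one_nz3[of N h k i] unfolding at_most_one_nz_def by auto
  next
    fix j i i' assume "j < N" "i < N" "i' < N" "fill1 N h k i j = 1 \<and> fill1 N h k i' j = 1"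
    then show "i = i'" using fill1_at_most_one_nz2[of N h k j] unfolding at_most_one_nz_def by auto
  qed (simp add: fill1_def)
  then show ?thesis by (simp add: signed_subperm_def)
qed

locale completion =
  fixes N :: nat and h :: hmat
  assumes N_pos: "0 < N" and sign: "sign_hmat N N N h"
    and partial1: "lines1 partial_01 N N N h" and partial2: "lines2 partial_01 N N N h"
    and partial3: "lines3 partial_01 N N N h"
begin

lemma psum1_01: "j < N \<Longrightarrow> l < N \<Longrightarrow> psum (\<lambda>i. h i j l) N \<in> {0,1}"
  using partial1 unfolding lines1_def partial_01_def by auto

lemma psum2_01: "i < N \<Longrightarrow> l < N \<Longrightarrow> psum (\<lambda>j. h i j l) N \<in> {0,1}"
  using partial2 unfolding lines2_def partial_01_def by auto

lemma psum3_01: "i < N \<Longrightarrow> j < N \<Longrightarrow> psum (\<lambda>l. h i j l) N \<in> {0,1}"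
  using partial3 unfolding lines3_def partial_01_def by auto

lemma count_ones_plane3:
  "l < N \<Longrightarrow> card {i. i < N \<and> psum (\<lambda>j. h i j l) N = 1} = card {j. j < N \<and> psum (\<lambda>i. h i j l) N = 1}"
  using plane_count_ones[of N "\<lambda>x y. h x y l"] psum1_01 psum2_01 by auto

lemma count_ones_plane1:
  "i < N \<Longrightarrow> card {j. j < N \<and> psum (\<lambda>l. h i j l) N = 1} = card {l. l < N \<and> psum (\<lambda>j. h i j l) N = 1}"
  using plane_count_ones[of N "\<lambda>x y. h i x y"] psum2_01 psum3_01 by auto

lemma count_ones_plane2:
  "j < N \<Longrightarrow> card {i. i < N \<and> psum (\<lambda>l. h i j l) N = 1} = card {l. l < N \<and> psum (\<lambda>i. h i j l) N = 1}"
  using plane_count_ones[of N "\<lambda>x y. h x j y"] psum1_01 psum3_01 by auto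

definition ext1 :: hmat where
  "ext1 = (\<lambda>i j l. if i < N then h i j l else fill1 N h (i - N) j l)"

definition needs2 :: "nat \<Rightarrow> nat \<Rightarrow> bool" where
  "needs2 i l \<longleftrightarrow> psum (\<lambda>j. ext1 i j l) N = 0"

lemma needs2_low: "i < N \<Longrightarrow> needs2 i l \<longleftrightarrow> psum (\<lambda>j. h i j l) N = 0"
  unfolding needs2_def ext1_def by simp

lemma needs2_high:
  assumes "k < N" "l < N"
  shows "needs2 (N + k) l \<longleftrightarrow> psum (\<lambda>i. h i ((k + N - l) mod N) l) N = 1"
proof -
  have "(k + N - l) mod N < N" using N_pos by simp
  then show ?thesis
    using psum_fill1_axis2[OF assms, of h] psum1_01[of "(k + N - l) mod N" l] assms(2)
    unfolding needs2_def ext1_def by auto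
qed

lemma card_needs2:
  assumes "l < N"
  shows "card {i. i < 2*N \<and> needs2 i l} = N"
proof -
  have "card {i. i < 2*N \<and> needs2 i l} = card {i. i < N \<and> needs2 i l} + card {k. k < N \<and> needs2 (N + k) l}"
    by (rule card_lessThan_split)
  also have "card {i. i < N \<and> needs2 i l} = card {i. i < N \<and> psum (\<lambda>j. h i j l) N = 0}"
    using needs2_low by (metis (no_types, lifting))
  also have "card {k. k < N \<and> needs2 (N + k) l} = card {k. k < N \<and> psum (\<lambda>i. h i ((k + N - l) mod N) l) N = 1}"
    using needs2_high assms by (metis (no_types, lifting))
  also have "\<dots> = card {j. j < N \<and> psum (\<lambda>i. h i j l) N = 1}"
    by (rule card_rotate[OF assms])
  also have "\<dots> = card {i. i < N \<and> psum (\<lambda>j. h i j l) N = 1}"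
    using count_ones_plane3[OF assms] by simp
  also have "card {i. i < N \<and> psum (\<lambda>j. h i j l) N = 0} + \<dots> = N"
    by (rule card_lessThan_01) (use psum2_01 assms in auto)
  finally show ?thesis .
qed

text \<open>On the layers \<open>l < N\<close> the relation is \<open>needs2\<close>, on \<open>N + l\<close> its complement; the
  padding makes it \<open>N\<close>-regular, so that it splits into permutations.\<close>
definition match2 :: "nat \<Rightarrow> nat \<Rightarrow> bool" where
  "match2 r c \<longleftrightarrow> (if r < N then needs2 c r else \<not> needs2 c (r - N))"

lemma match2_regular: "regular_rel (2*N) N match2"
  unfolding regular_rel_def
proof (intro conjI allI impI)
  fix r assume r: "r < 2*N"
  show "card {c. c < 2*N \<and> match2 r c} = N"
  proof (cases "r < N")
    case True
    then show ?thesis using card_needs2[OF True] unfolding match2_def by simp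
  next
    case False
    then have "r - N < N" using r by simp
    then show ?thesis
      using card_needs2 card_lessThan_not[of "2*N" "\<lambda>c. needs2 c (r - N)"] False
      unfolding match2_def by simp
  qed
next
  fix c assume c: "c < 2*N"
  have "card {r. r < 2*N \<and> match2 r c} = card {r. r < N \<and> match2 r c} + card {k. k < N \<and> match2 (N + k) c}"
    by (rule card_lessThan_split)
  also have "{r. r < N \<and> match2 r c} = {r. r < N \<and> needs2 c r}" by (auto simp: match2_def)
  also have "{k. k < N \<and> match2 (N + k) c} = {k. k < N \<and> \<not> needs2 c k}" by (auto simp: match2_def)
  also have "card {r. r < N \<and> needs2 c r} + card {k. k < N \<and> \<not> needs2 c k} = N"
    using card_lessThan_not[of N "needs2 c"] card_lessThan_le[of N "needs2 c"] by simp
  finally show "card {r. r < 2*N \<and> match2 r c} = N" .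
qed

end

locale completion2 = completion +
  fixes \<sigma> :: "nat \<Rightarrow> nat \<Rightarrow> nat"
  assumes sigma: "perm_decomp (2*N) N match2 \<sigma>"
begin

lemma sigma_match: "t < N \<Longrightarrow> r < 2*N \<Longrightarrow> \<sigma> t r < 2*N \<and> match2 r (\<sigma> t r)"
  using sigma unfolding perm_decomp_def by blast

lemma sigma_inj: "t < N \<Longrightarrow> inj_on (\<sigma> t) {..<2*N}"
  using sigma unfolding perm_decomp_def by blast

lemma sigma_unique:
  assumes "l < N" "i < 2*N" "needs2 i l"
  shows "\<exists>!t. t < N \<and> \<sigma> t l = i"
proof -
  have "l < 2*N" "match2 l i" using assms by (simp_all add: match2_def)
  then show ?thesis using sigma assms(2) unfolding perm_decomp_def by blast
qed

lemma sigma_hits: "l < N \<Longrightarrow> i < 2*N \<Longrightarrow> (\<exists>t<N. \<sigma> t l = i) \<longleftrightarrow> needs2 i l"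
  using sigma_match[of _ l] sigma_unique[of l i] by (auto simp: match2_def)

definition fill2 :: "nat \<Rightarrow> nat \<Rightarrow> nat \<Rightarrow> int" where
  "fill2 t i l = (if \<sigma> t l = i then 1 else 0)"

definition ext2 :: hmat where
  "ext2 = (\<lambda>i j l. if j < N then ext1 i j l else fill2 (j - N) i l)"

definition needs3 :: "nat \<Rightarrow> nat \<Rightarrow> bool" where
  "needs3 i j \<longleftrightarrow> psum (\<lambda>l. ext2 i j l) N = 0"

lemma fill2_at_most_one_nz3:
  assumes "t < N"
  shows "at_most_one_nz N (\<lambda>l. fill2 t i l)"
  unfolding at_most_one_nz_def
proof (intro allI impI)
  fix l l' assume "l < N" "l' < N" "fill2 t i l \<noteq> 0" "fill2 t i l' \<noteq> 0"
  then show "l = l'" using inj_onD[OF sigma_inj[OF assms], of l l'] by (auto simp: fill2_def split: if_splits)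
qed

lemma fill2_signed_subperm: "t < N \<Longrightarrow> signed_subperm (2*N) N (fill2 t)"
  using fill2_at_most_one_nz3 unfolding signed_subperm_def subperm_def at_most_one_nz_def
  by (auto simp: fill2_def)

lemma psum_fill2_axis3:
  "t < N \<Longrightarrow> psum (\<lambda>l. fill2 t i l) N = (if \<exists>l<N. \<sigma> t l = i then 1 else 0)"
  using psum_single[of _ N "\<lambda>l. fill2 t i l"] fill2_at_most_one_nz3[of t i]
  unfolding at_most_one_nz_def by (auto simp: fill2_def psum_def)

lemma psum_fill2_planes:
  assumes "l < N" "i < 2*N"
  shows "psum (\<lambda>t. fill2 t i l) N = (if needs2 i l then 1 else 0)"
proof (cases "needs2 i l")
  case True
  note ex1 = sigma_unique[OF assms True]
  then obtain t0 where t0: "t0 < N" "\<sigma> t0 l = i" by auto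
  have "psum (\<lambda>t. fill2 t i l) N = fill2 t0 i l"
    using ex1 t0 by (intro psum_single) (auto simp: fill2_def)
  then show ?thesis using True t0 by (simp add: fill2_def)
next
  case False
  then show ?thesis using sigma_hits[OF assms] by (simp add: psum_def fill2_def)
qed

lemma fill2_at_most_one_nz_planes:
  assumes "l < N" "i < 2*N"
  shows "at_most_one_nz N (\<lambda>t. fill2 t i l)"
  unfolding at_most_one_nz_def
proof (intro allI impI)
  fix t t' assume t: "t < N" "t' < N" "fill2 t i l \<noteq> 0" "fill2 t' i l \<noteq> 0"
  then have "\<sigma> t l = i" "\<sigma> t' l = i" by (auto simp: fill2_def split: if_splits)
  moreover from this have "needs2 i l" using sigma_hits[OF assms] t(1) by blast
  ultimately show "t = t'" using sigma_unique[OF assms] t(1,2) by blast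
qed

lemma partial_01_ext1_axis2: "i < 2*N \<Longrightarrow> l < N \<Longrightarrow> partial_01 N (\<lambda>j. ext1 i j l)"
proof (cases "i < N")
  case False
  have "partial_01 N (\<lambda>j. fill1 N h (i - N) j l)"
    by (rule at_most_one_nz_partial_01[OF fill1_at_most_one_nz2]) (simp add: fill1_def)
  then show ?thesis using False unfolding ext1_def by simp
qed (use partial2 in \<open>simp add: lines2_def ext1_def\<close>)

lemma needs3_low: "i < N \<Longrightarrow> j < N \<Longrightarrow> needs3 i j \<longleftrightarrow> psum (\<lambda>l. h i j l) N = 0"
  unfolding needs3_def ext2_def ext1_def by simp

lemma needs3_high:
  assumes "k < N" "j < N"
  shows "needs3 (N + k) j \<longleftrightarrow> psum (\<lambda>i. h i j ((k + N - j) mod N)) N = 1"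
proof -
  have "(k + N - j) mod N < N" using N_pos by simp
  then show ?thesis
    using psum_fill1_axis3[OF assms, of h] psum1_01[of j "(k + N - j) mod N"] assms(2)
    unfolding needs3_def ext2_def ext1_def by auto
qed

lemma needs3_new: "t < N \<Longrightarrow> needs3 i (N + t) \<longleftrightarrow> \<not> (\<exists>l<N. \<sigma> t l = i)"
  using psum_fill2_axis3 unfolding needs3_def ext2_def by simp

text \<open>A pair \<open>(t, l)\<close> with \<open>\<sigma> t l = i\<close> is determined by either coordinate.\<close>
lemma count_sigma_hits:
  assumes "i < 2*N"
  shows "card {t. t < N \<and> (\<exists>l<N. \<sigma> t l = i)} = card {l. l < N \<and> needs2 i l}"
proof -
  define P where "P = {(t,l). t < N \<and> l < N \<and> \<sigma> t l = i}"
  have "inj_on fst P"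
  proof (rule inj_onI)
    fix x y assume "x \<in> P" "y \<in> P" "fst x = fst y"
    then obtain t l l' where xy: "x = (t,l)" "y = (t,l')" "t < N" "l < N" "l' < N" "\<sigma> t l = \<sigma> t l'"
      unfolding P_def by auto
    then show "x = y" using inj_onD[OF sigma_inj[of t], of l l'] by simp
  qed
  moreover have "inj_on snd P"
  proof (rule inj_onI)
    fix x y assume "x \<in> P" "y \<in> P" "snd x = snd y"
    then obtain t t' l where xy: "x = (t,l)" "y = (t',l)" "t < N" "t' < N" "l < N"
      "\<sigma> t l = i" "\<sigma> t' l = i"
      unfolding P_def by auto
    then have "\<exists>!t. t < N \<and> \<sigma> t l = i" using sigma_hits[OF _ assms] sigma_unique[OF _ assms] by blast
    then show "x = y" using xy by auto
  qed
  moreover have "fst ` P = {t. t < N \<and> (\<exists>l<N. \<sigma> t l = i)}"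
    unfolding P_def by (force simp: image_iff)
  moreover have "snd ` P = {l. l < N \<and> needs2 i l}"
    using sigma_hits[OF _ assms] unfolding P_def by (force simp: image_iff)
  ultimately show ?thesis by (metis card_image)
qed

lemma card_needs3_row_low:
  assumes i: "i < N"
  shows "card {j. j < 2*N \<and> needs3 i j} = N"
proof -
  have "card {j. j < 2*N \<and> needs3 i j} = card {j. j < N \<and> needs3 i j} + card {t. t < N \<and> needs3 i (N + t)}"
    by (rule card_lessThan_split)
  also have "card {j. j < N \<and> needs3 i j} = card {j. j < N \<and> psum (\<lambda>l. h i j l) N = 0}"
    using needs3_low[OF i] by (metis (no_types, lifting))
  also have "card {t. t < N \<and> needs3 i (N + t)} = card {t. t < N \<and> \<not> (\<exists>l<N. \<sigma> t l = i)}"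
    using needs3_new by (metis (no_types, lifting))
  also have "\<dots> = N - card {t. t < N \<and> (\<exists>l<N. \<sigma> t l = i)}"
    by (rule card_lessThan_not)
  also have "card {t. t < N \<and> (\<exists>l<N. \<sigma> t l = i)} = card {l. l < N \<and> needs2 i l}"
    using count_sigma_hits[of i] i by simp
  also have "\<dots> = card {l. l < N \<and> psum (\<lambda>j. h i j l) N = 0}"
    using needs2_low[OF i] by (metis (no_types, lifting))
  finally have eq: "card {j. j < 2*N \<and> needs3 i j} = card {j. j < N \<and> psum (\<lambda>l. h i j l) N = 0} +
      (N - card {l. l < N \<and> psum (\<lambda>j. h i j l) N = 0})" .
  have "card {j. j < N \<and> psum (\<lambda>l. h i j l) N = 0} + card {j. j < N \<and> psum (\<lambda>l. h i j l) N = 1} = N"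
    by (rule card_lessThan_01) (use psum3_01 i in auto)
  moreover have "card {l. l < N \<and> psum (\<lambda>j. h i j l) N = 0} + card {l. l < N \<and> psum (\<lambda>j. h i j l) N = 1} = N"
    by (rule card_lessThan_01) (use psum2_01 i in auto)
  ultimately show ?thesis using eq count_ones_plane1[OF i] by linarith
qed

lemma card_needs3_row_high:
  assumes k: "k < N"
  shows "card {j. j < 2*N \<and> needs3 (N + k) j} = N"
proof -
  have "card {j. j < 2*N \<and> needs3 (N + k) j}
      = card {j. j < N \<and> needs3 (N + k) j} + card {t. t < N \<and> needs3 (N + k) (N + t)}"
    by (rule card_lessThan_split)
  also have "card {j. j < N \<and> needs3 (N + k) j} = card {j. j < N \<and> psum (\<lambda>i. h i j ((k + N - j) mod N)) N = 1}"
    using needs3_high[OF k] by (metis (no_types, lifting))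
  also have "\<dots> = card {l. l < N \<and> psum (\<lambda>i. h i ((k + N - l) mod N) l) N = 1}"
    by (rule card_reflect[OF k])
  also have "card {t. t < N \<and> needs3 (N + k) (N + t)} = card {t. t < N \<and> \<not> (\<exists>l<N. \<sigma> t l = N + k)}"
    using needs3_new by (metis (no_types, lifting))
  also have "\<dots> = N - card {t. t < N \<and> (\<exists>l<N. \<sigma> t l = N + k)}"
    by (rule card_lessThan_not)
  also have "card {t. t < N \<and> (\<exists>l<N. \<sigma> t l = N + k)} = card {l. l < N \<and> needs2 (N + k) l}"
    using count_sigma_hits[of "N + k"] k by simp
  also have "\<dots> = card {l. l < N \<and> psum (\<lambda>i. h i ((k + N - l) mod N) l) N = 1}"
    using needs2_high[OF k] by (metis (no_types, lifting))
  finally show ?thesis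
    using card_lessThan_le[of N "\<lambda>l. psum (\<lambda>i. h i ((k + N - l) mod N) l) N = 1"] by linarith
qed

lemma card_needs3_col_low:
  assumes j: "j < N"
  shows "card {i. i < 2*N \<and> needs3 i j} = N"
proof -
  have "card {i. i < 2*N \<and> needs3 i j} = card {i. i < N \<and> needs3 i j} + card {k. k < N \<and> needs3 (N + k) j}"
    by (rule card_lessThan_split)
  also have "card {i. i < N \<and> needs3 i j} = card {i. i < N \<and> psum (\<lambda>l. h i j l) N = 0}"
    using needs3_low j by (metis (no_types, lifting))
  also have "card {k. k < N \<and> needs3 (N + k) j} = card {k. k < N \<and> psum (\<lambda>i. h i j ((k + N - j) mod N)) N = 1}"
    using needs3_high j by (metis (no_types, lifting))
  also have "\<dots> = card {l. l < N \<and> psum (\<lambda>i. h i j l) N = 1}"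
    by (rule card_rotate[OF j])
  finally have eq: "card {i. i < 2*N \<and> needs3 i j}
      = card {i. i < N \<and> psum (\<lambda>l. h i j l) N = 0} + card {l. l < N \<and> psum (\<lambda>i. h i j l) N = 1}" .
  have "card {i. i < N \<and> psum (\<lambda>l. h i j l) N = 0} + card {i. i < N \<and> psum (\<lambda>l. h i j l) N = 1} = N"
    by (rule card_lessThan_01) (use psum3_01 j in auto)
  then show ?thesis using eq count_ones_plane2[OF j] by linarith
qed

lemma card_needs3_col_high:
  assumes t: "t < N"
  shows "card {i. i < 2*N \<and> needs3 i (N + t)} = N"
proof -
  have "\<sigma> t ` {..<N} = {i. i < 2*N \<and> (\<exists>l<N. \<sigma> t l = i)}"
    using sigma_match[OF t] by force
  moreover have "card (\<sigma> t ` {..<N}) = N"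
    using sigma_inj[OF t] by (simp add: card_image inj_on_subset[of _ "{..<2*N}"])
  ultimately show ?thesis
    using needs3_new[OF t] card_lessThan_not[of "2*N" "\<lambda>i. \<exists>l<N. \<sigma> t l = i"] by simp
qed

lemma needs3_regular: "regular_rel (2*N) N needs3"
  unfolding regular_rel_def
proof (intro conjI allI impI)
  fix i assume "i < 2*N"
  then show "card {j. j < 2*N \<and> needs3 i j} = N"
    using card_needs3_row_low card_needs3_row_high[of "i - N"] by (cases "i < N") auto
next
  fix j assume "j < 2*N"
  then show "card {i. i < 2*N \<and> needs3 i j} = N"
    using card_needs3_col_low card_needs3_col_high[of "j - N"] by (cases "j < N") auto
qed

end

locale completion3 = completion2 +
  fixes \<tau> :: "nat \<Rightarrow> nat \<Rightarrow> nat"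
  assumes tau: "perm_decomp (2*N) N needs3 \<tau>"
begin

lemma tau_needs3: "s < N \<Longrightarrow> i < 2*N \<Longrightarrow> \<tau> s i < 2*N \<and> needs3 i (\<tau> s i)"
  using tau unfolding perm_decomp_def by blast

lemma tau_inj: "s < N \<Longrightarrow> inj_on (\<tau> s) {..<2*N}"
  using tau unfolding perm_decomp_def by blast

lemma tau_unique: "i < 2*N \<Longrightarrow> j < 2*N \<Longrightarrow> needs3 i j \<Longrightarrow> \<exists>!s. s < N \<and> \<tau> s i = j"
  using tau unfolding perm_decomp_def by blast

lemma tau_surj:
  assumes "s < N" "j < 2*N"
  obtains i where "i < 2*N" "\<tau> s i = j"
proof -
  have "\<tau> s ` {..<2*N} = {..<2*N}"
    using tau_needs3[OF assms(1)] tau_inj[OF assms(1)] by (intro endo_inj_surj) auto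
  then show thesis using that assms(2) by (metis imageE lessThan_iff)
qed

definition fill3 :: "nat \<Rightarrow> nat \<Rightarrow> nat \<Rightarrow> int" where
  "fill3 s i j = (if \<tau> s i = j then 1 else 0)"

definition ext3 :: hmat where
  "ext3 = (\<lambda>i j l. if l < N then ext2 i j l else fill3 (l - N) i j)"

lemma fill3_signed_subperm: "s < N \<Longrightarrow> signed_subperm (2*N) (2*N) (fill3 s)"
  using inj_onD[OF tau_inj] unfolding signed_subperm_def subperm_def fill3_def by auto

lemma inserts_to_ext3: "inserts_to (N,N,N,h) (2*N,2*N,2*N,ext3)"
proof -
  have "inserts_to (N,N,N,h) (N + N, N, N, ext1)"
    using inserts_to_append1[of N N N "fill1 N h" N h] fill1_signed_subperm unfolding ext1_def by simp
  also have "inserts_to (N + N,N,N,ext1) (N + N, N + N, N, ext2)"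
    using inserts_to_append2[of N "N + N" N fill2 N ext1] fill2_signed_subperm
    unfolding ext2_def by (simp add: mult_2)
  also have "inserts_to (N + N,N + N,N,ext2) (N + N, N + N, N + N, ext3)"
    using inserts_to_append3[of N "N + N" "N + N" fill3 N ext2] fill3_signed_subperm
    unfolding ext3_def by (simp add: mult_2)
  finally show ?thesis by (simp add: mult_2)
qed

lemma sign_hmat_ext3: "sign_hmat (2*N) (2*N) (2*N) ext3"
  using sign fill1_01 unfolding sign_hmat_def ext3_def ext2_def ext1_def fill2_def fill3_def
  by (auto split: if_splits) (metis insertE singletonD)

lemma ashm_line1_ext3:
  assumes "j < 2*N" "l < 2*N"
  shows "ashm_line (2*N) (\<lambda>i. ext3 i j l)"
proof -
  consider "N \<le> l" | "l < N" "N \<le> j" | "l < N" "j < N" by linarith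
  then show ?thesis
  proof cases
    case 1
    have s: "l - N < N" using 1 assms(2) by simp
    obtain i0 where i0: "i0 < 2*N" "\<tau> (l - N) i0 = j" using tau_surj[OF s assms(1)] .
    have eq: "ext3 i j l = (if i = i0 then 1 else 0)" if "i < 2*N" for i
    proof -
      have "\<tau> (l - N) i = j \<longleftrightarrow> i = i0" using inj_onD[OF tau_inj[OF s], of i i0] i0 that by auto
      then show ?thesis using 1 by (simp add: ext3_def fill3_def)
    qed
    show ?thesis by (rule ashm_line_cong[OF eq ashm_line_indicator[OF i0(1)]])
  next
    case 2
    then have "(\<lambda>i. ext3 i j l) = (\<lambda>i. if i = \<sigma> (j - N) l then 1 else 0)"
      by (auto simp: ext3_def ext2_def fill2_def fun_eq_iff)
    then show ?thesis using ashm_line_indicator sigma_match 2 assms by simp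
  next
    case 3
    have "(\<lambda>i. ext3 i j l) = (\<lambda>i. if i < N then h i j l else fill1 N h (i - N) j l)"
      using 3 by (simp add: ext3_def ext2_def ext1_def)
    moreover have "ashm_line (N + N) (\<lambda>i. if i < N then h i j l else fill1 N h (i - N) j l)"
    proof (rule ashm_line_append)
      show "partial_01 N (\<lambda>i. h i j l)" using partial1 3 unfolding lines1_def by blast
      show "psum (\<lambda>k. fill1 N h k j l) N = 1 - psum (\<lambda>i. h i j l) N"
        using psum_fill1_planes[OF N_pos, of h j l] psum1_01[OF 3(2,1)] by auto
    qed (auto simp: fill1_def at_most_one_nz_def)
    ultimately show ?thesis by (simp add: mult_2)
  qed
qed

lemma ashm_line2_ext3:
  assumes "i < 2*N" "l < 2*N"
  shows "ashm_line (2*N) (\<lambda>j. ext3 i j l)"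
proof (cases "l < N")
  case False
  then have "(\<lambda>j. ext3 i j l) = (\<lambda>j. if j = \<tau> (l - N) i then 1 else 0)"
    by (auto simp: ext3_def fill3_def fun_eq_iff)
  then show ?thesis using ashm_line_indicator tau_needs3 False assms by simp
next
  case True
  note ext1 = partial_01_ext1_axis2[OF assms(1) True]
  have "(\<lambda>j. ext3 i j l) = (\<lambda>j. if j < N then ext1 i j l else fill2 (j - N) i l)"
    using True by (simp add: ext3_def ext2_def)
  moreover have "ashm_line (N + N) (\<lambda>j. if j < N then ext1 i j l else fill2 (j - N) i l)"
  proof (rule ashm_line_append[OF ext1 _ fill2_at_most_one_nz_planes[OF True assms(1)]])
    show "psum (\<lambda>t. fill2 t i l) N = 1 - psum (\<lambda>j. ext1 i j l) N"
      using psum_fill2_planes[OF True assms(1)] ext1 unfolding needs2_def partial_01_def by auto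
  qed (simp add: fill2_def)
  ultimately show ?thesis by (simp add: mult_2)
qed

lemma partial_01_ext2_axis3:
  assumes "i < 2*N" "j < 2*N"
  shows "partial_01 N (\<lambda>l. ext2 i j l)"
proof -
  consider "N \<le> j" | "j < N" "i < N" | "j < N" "N \<le> i" by linarith
  then show ?thesis
  proof cases
    case 1
    have "j - N < N" using 1 assms(2) by simp
    then have "partial_01 N (\<lambda>l. fill2 (j - N) i l)"
      by (rule at_most_one_nz_partial_01[OF fill2_at_most_one_nz3]) (simp add: fill2_def)
    then show ?thesis using 1 unfolding ext2_def by simp
  next
    case 2
    then show ?thesis using partial3 unfolding lines3_def ext2_def ext1_def by simp
  next
    case 3
    have "partial_01 N (\<lambda>l. fill1 N h (i - N) j l)"
      by (rule at_most_one_nz_partial_01[OF fill1_at_most_one_nz3]) (simp add: fill1_def)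
    then show ?thesis using 3 unfolding ext2_def ext1_def by simp
  qed
qed

lemma psum_fill3_planes:
  assumes "i < 2*N" "j < 2*N"
  shows "psum (\<lambda>s. fill3 s i j) N = (if needs3 i j then 1 else 0)"
proof (cases "needs3 i j")
  case True
  note ex1 = tau_unique[OF assms True]
  then obtain s0 where s0: "s0 < N" "\<tau> s0 i = j" by auto
  have "psum (\<lambda>s. fill3 s i j) N = fill3 s0 i j"
    using ex1 s0 by (intro psum_single) (auto simp: fill3_def)
  then show ?thesis using True s0 by (simp add: fill3_def)
next
  case False
  then show ?thesis using tau_needs3 assms(1) by (auto simp: psum_def fill3_def intro!: sum.neutral)
qed

lemma fill3_at_most_one_nz_planes:
  "i < 2*N \<Longrightarrow> j < 2*N \<Longrightarrow> at_most_one_nz N (\<lambda>s. fill3 s i j)"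
  using tau_needs3 tau_unique unfolding at_most_one_nz_def fill3_def by (metis (full_types))

lemma ashm_line3_ext3:
  assumes "i < 2*N" "j < 2*N"
  shows "ashm_line (2*N) (\<lambda>l. ext3 i j l)"
proof -
  note ext2 = partial_01_ext2_axis3[OF assms]
  have "ashm_line (N + N) (\<lambda>l. if l < N then ext2 i j l else fill3 (l - N) i j)"
  proof (rule ashm_line_append[OF ext2 _ fill3_at_most_one_nz_planes[OF assms]])
    show "psum (\<lambda>s. fill3 s i j) N = 1 - psum (\<lambda>l. ext2 i j l) N"
      using psum_fill3_planes[OF assms] ext2 unfolding needs3_def partial_01_def by auto
  qed (simp add: fill3_def)
  then show ?thesis by (simp add: ext3_def mult_2)
qed

end

theorem completion_exists:
  assumes "0 < N" "sign_hmat N N N h"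
    and "lines1 partial_01 N N N h" "lines2 partial_01 N N N h" "lines3 partial_01 N N N h"
  obtains G where "inserts_to (N,N,N,h) (2*N,2*N,2*N,G)" "sign_hmat (2*N) (2*N) (2*N) G"
    "lines1 ashm_line (2*N) (2*N) (2*N) G" "lines2 ashm_line (2*N) (2*N) (2*N) G"
    "lines3 ashm_line (2*N) (2*N) (2*N) G"
proof -
  interpret completion N h by (unfold_locales) (use assms in auto)
  obtain \<sigma> where "perm_decomp (2*N) N match2 \<sigma>" using regular_rel_perm_decomp match2_regular by blast
  then interpret completion2 N h \<sigma> by unfold_locales
  obtain \<tau> where "perm_decomp (2*N) N needs3 \<tau>" using regular_rel_perm_decomp needs3_regular by blast
  then interpret completion3 N h \<sigma> \<tau> by unfold_locales
  show thesis
    using that[OF inserts_to_ext3 sign_hmat_ext3] ashm_line1_ext3 ashm_line2_ext3 ashm_line3_ext3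
    unfolding lines1_def lines2_def lines3_def by blast
qed

lemma is_ASHM_if_ashm_lines:
  assumes "sign_hmat n n n G"
    and "lines1 ashm_line n n n G" "lines2 ashm_line n n n G" "lines3 ashm_line n n n G"
  shows "is_ASHM n G"
  using assms ashm_line_alt_line unfolding is_ASHM_def sign_entries_def sign_hmat_def
    lines1_def lines2_def lines3_def by simp

lemma ashm_extension:
  assumes "1 \<le> m" "1 \<le> n" "1 \<le> k" "sign_hmat m n k A"
  obtains N G where "max m (max n k) \<le> N" "inserts_to (m,n,k,A) (N,N,N,G)" "is_ASHM N G"
proof -
  obtain a b c G1 where G1: "m \<le> a" "n \<le> b" "k \<le> c" "inserts_to (m,n,k,A) (a,b,c,G1)"
    "sign_hmat a b c G1" "lines1 partial_01 a b c G1" "lines2 partial_01 a b c G1"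
    "lines3 partial_01 a b c G1"
    by (rule all_lines_partial_01[OF assms(4,1-3)])
  define M where "M = max a (max b c)"
  define G2 where "G2 = (\<lambda>i j l. if i < a \<and> j < b \<and> l < c then G1 i j l else 0)"
  have M: "a \<le> M" "b \<le> M" "c \<le> M" "0 < M" using G1(1) assms(1) unfolding M_def by auto
  have R: "inserts_to (m,n,k,A) (M,M,M,G2)"
    using G1(4) inserts_to_zero_pad[OF M(1-3)] unfolding G2_def by (rule inserts_to_trans)
  have S: "sign_hmat M M M G2" using G1(5) unfolding G2_def sign_hmat_def by simp
  have L: "lines1 partial_01 M M M G2" "lines2 partial_01 M M M G2" "lines3 partial_01 M M M G2"
    using lines_zero_pad[OF G1(6-8) M(1-3)] unfolding G2_def by auto
  obtain G where "inserts_to (M,M,M,G2) (2*M,2*M,2*M,G)" "sign_hmat (2*M) (2*M) (2*M) G"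
    "lines1 ashm_line (2*M) (2*M) (2*M) G" "lines2 ashm_line (2*M) (2*M) (2*M) G"
    "lines3 ashm_line (2*M) (2*M) (2*M) G"
    by (rule completion_exists[OF M(4) S L])
  moreover have "max m (max n k) \<le> 2*M" using G1(1-3) M unfolding M_def by linarith
  ultimately show thesis using that[of "2*M" G] inserts_to_trans[OF R] is_ASHM_if_ashm_lines by blast
qed

theorem mainTheorem20:
  fixes m' n' k' :: nat and A' :: hmat
  assumes "1 \<le> m'" and "1 \<le> n'" and "1 \<le> k'"
    and "\<forall>p<m'. \<forall>q<n'. \<forall>r<k'. A' p q r \<in> {0, 1, -1}"
  shows "\<exists>n A fI fJ fK.
           n \<ge> max m' (max n' k') \<and> is_ASHM n A \<and>
           strict_mono_on {..<m'} fI \<and> fI ` {..<m'} \<subseteq> {..<n} \<and>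
           strict_mono_on {..<n'} fJ \<and> fJ ` {..<n'} \<subseteq> {..<n} \<and>
           strict_mono_on {..<k'} fK \<and> fK ` {..<k'} \<subseteq> {..<n} \<and>
           (\<forall>p<m'. \<forall>q<n'. \<forall>r<k'. A' p q r = A (fI p) (fJ q) (fK r)) \<and>
           (\<exists>B. insert_plane\<^sup>*\<^sup>* (m', n', k', A') (n, n, n, B) \<and>
                (\<forall>i<n. \<forall>j<n. \<forall>l<n. B i j l = A i j l))"
proof -
  obtain n A where n: "max m' (max n' k') \<le> n" and ashm: "is_ASHM n A"
    and R: "inserts_to (m',n',k',A') (n,n,n,A)"
    using ashm_extension[OF assms(1-3)] assms(4) unfolding sign_hmat_def by metis
  obtain fI fJ fK where "strict_mono_on {..<m'} fI" "fI ` {..<m'} \<subseteq> {..<n}"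
    "strict_mono_on {..<n'} fJ" "fJ ` {..<n'} \<subseteq> {..<n}"
    "strict_mono_on {..<k'} fK" "fK ` {..<k'} \<subseteq> {..<n}"
    "\<forall>p<m'. \<forall>q<n'. \<forall>r<k'. A' p q r = A (fI p) (fJ q) (fK r)"
    using subhmat_inserts_to[OF R] unfolding subhmat_def by auto
  moreover obtain B where "insert_plane\<^sup>*\<^sup>* (m', n', k', A') (n, n, n, B)"
    "\<forall>i<n. \<forall>j<n. \<forall>l<n. B i j l = A i j l"
    using R unfolding inserts_to_def by (auto simp: box_eq_def split: prod.splits)
  ultimately show ?thesis using n ashm by blast
qed

end
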